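(* Let $\mu>0$ and let $\omega_{k,m}=\sqrt{k^2+q_m^2+\mu^2}$ for $k\in\mathbb{R}^{d-1}$, $m\in\mathbb{N}$, with $(q_m)$ the sequence described in the context. There is a linear continuous map $(\mathcal{S}(\mathbb{R}^{d-1})\otimes s(\mathbb{N}))^2\ni(\hat f^+,\hat f^-)\mapsto\hat f'\in\mathcal{S}(\mathbb{R}^d)$ such that \[ \hat f^\pm_m(k)=\hat f'(\pm\omega_{k,m},\pm k)\qquad\forall k\in\mathbb{R}^{d-1},\ m\in\mathbb{N}. \]
   Context: $d\ge1$, $S>0$, $c>0$. $\mathbb{N}=\{0,1,2,\dots\}$. $q_0=0$; for $p\ge1$, $q_{2p}$ is the unique solution of $c^{-1}\tan(qS)=-q$ in $((p-\frac12)\frac\pi S,p\frac\pi S)$ and $q_{2p-1}$ the unique solution of $q\tan(qS)=c^{-1}$ in $((p-1)\frac\pi S,(p-\frac12)\frac\pi S)$ (so $(q_m)$ is increasing, with $q_m=\frac{\pi}{2S}(m-1)+O(1/m)$). $s(\mathbb{N})$ is the space of sequences decaying faster than any power; $\mathcal{S}(\mathbb{R}^{d-1})\otimes s(\mathbb{N})$ is the space of sequences $(\hat f_m)_m$ of Schwartz functions with finite seminorms $\sum_m\sup_k m^c|k^\alpha||\partial^\beta\hat f_m(k)|$ for all multi-indices $\alpha,\beta$ and $c\ge0$, with the corresponding topology. *)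

theory Defs
  imports "HOL-Analysis.Analysis"
begin

text \<open>Points of R^n are represented as functions nat => real vanishing from index n on.\<close>
definition Eucl :: "nat \<Rightarrow> (nat \<Rightarrow> real) set" where
  "Eucl n = {x. \<forall>i\<ge>n. x i = 0}"

definition sqnorm :: "nat \<Rightarrow> (nat \<Rightarrow> real) \<Rightarrow> real" where
  "sqnorm n x = (\<Sum>i<n. (x i)\<^sup>2)"

definition mon :: "nat \<Rightarrow> (nat \<Rightarrow> nat) \<Rightarrow> (nat \<Rightarrow> real) \<Rightarrow> real" where
  "mon n \<alpha> x = (\<Prod>i<n. x i ^ \<alpha> i)"

definition pd :: "nat \<Rightarrow> ((nat \<Rightarrow> real) \<Rightarrow> complex) \<Rightarrow> (nat \<Rightarrow> real) \<Rightarrow> complex" where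
  "pd i f x = vector_derivative (\<lambda>t. f (x(i := t))) (at (x i))"

text \<open>Iterated partial derivative; a multi-index beta is given as a list of directions.\<close>
fun pds :: "nat list \<Rightarrow> ((nat \<Rightarrow> real) \<Rightarrow> complex) \<Rightarrow> (nat \<Rightarrow> real) \<Rightarrow> complex" where
  "pds [] f = f"
| "pds (i # is) f = pd i (pds is f)"

definition schwartz :: "nat \<Rightarrow> ((nat \<Rightarrow> real) \<Rightarrow> complex) \<Rightarrow> bool" where
  "schwartz n f \<longleftrightarrow> (\<forall>x. x \<notin> Eucl n \<longrightarrow> f x = 0) \<and>
     (\<forall>\<beta>. set \<beta> \<subseteq> {..<n} \<longrightarrow>
        (\<forall>x\<in>Eucl n. \<forall>i<n. (\<lambda>t. pds \<beta> f (x(i := t))) differentiable (at (x i))) \<and>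
        (\<forall>\<alpha>. bounded ((\<lambda>x. complex_of_real (mon n \<alpha> x) * pds \<beta> f x) ` Eucl n)))"

definition snorm :: "nat \<Rightarrow> (nat \<Rightarrow> nat) \<Rightarrow> nat list \<Rightarrow> ((nat \<Rightarrow> real) \<Rightarrow> complex) \<Rightarrow> real" where
  "snorm n \<alpha> \<beta> f = (SUP x\<in>Eucl n. norm (complex_of_real (mon n \<alpha> x) * pds \<beta> f x))"

text \<open>The space S(R^n) tensor s(N): sequences of Schwartz functions with finite seminorms.\<close>
definition ts_space :: "nat \<Rightarrow> (nat \<Rightarrow> (nat \<Rightarrow> real) \<Rightarrow> complex) \<Rightarrow> bool" where
  "ts_space n F \<longleftrightarrow> (\<forall>m. schwartz n (F m)) \<and>
     (\<forall>c \<alpha> \<beta>. set \<beta> \<subseteq> {..<n} \<longrightarrow> summable (\<lambda>m. real m ^ c * snorm n \<alpha> \<beta> (F m)))"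

definition tnorm :: "nat \<Rightarrow> nat \<times> (nat \<Rightarrow> nat) \<times> nat list \<Rightarrow> (nat \<Rightarrow> (nat \<Rightarrow> real) \<Rightarrow> complex) \<Rightarrow> real" where
  "tnorm n idx F = (case idx of (c, \<alpha>, \<beta>) \<Rightarrow> (\<Sum>m. real m ^ c * snorm n \<alpha> \<beta> (F m)))"

definition pt :: "real \<Rightarrow> (nat \<Rightarrow> real) \<Rightarrow> (nat \<Rightarrow> real)" where
  "pt t k = (\<lambda>i. case i of 0 \<Rightarrow> t | Suc j \<Rightarrow> k j)"

definition qseq :: "real \<Rightarrow> real \<Rightarrow> nat \<Rightarrow> real" where
  "qseq S c m =
    (if m = 0 then 0
     else if even m then
       (THE q. (real (m div 2) - 1/2) * pi / S < q \<and> q < real (m div 2) * pi / S \<and> tan (q * S) / c = - q)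
     else
       (THE q. (real ((m + 1) div 2) - 1) * pi / S < q \<and> q < (real ((m + 1) div 2) - 1/2) * pi / S
               \<and> q * tan (q * S) = 1 / c))"

definition omega :: "real \<Rightarrow> real \<Rightarrow> real \<Rightarrow> nat \<Rightarrow> (nat \<Rightarrow> real) \<Rightarrow> nat \<Rightarrow> real" where
  "omega S c \<mu> n k m = sqrt (sqnorm n k + (qseq S c m)\<^sup>2 + \<mu>\<^sup>2)"

end

theory Submission
  imports Defs "HOL-Computational_Algebra.Polynomial"
begin

text \<open>
  The squares \<open>q\<^sub>m\<^sup>2\<close> are uniformly separated and grow quadratically, so the mass shells
  \<open>y\<^sub>0\<^sup>2 - |k|\<^sup>2 = q\<^sub>m\<^sup>2 + \<mu>\<^sup>2\<close> are pairwise at distance \<open>\<ge> 2\<delta>\<close> in the variable \<open>y\<^sub>0\<^sup>2 - |k|\<^sup>2\<close> and stay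
  away from the light cone. Put \<open>f'(y) = \<chi>(y\<^sub>0\<^sup>2 - |k|\<^sup>2 - q\<^sub>m\<^sup>2 - \<mu>\<^sup>2) f\<^sup>\<plusminus>\<^sub>m(\<plusminus>k)\<close> near the
  \<open>m\<close>-th shell (sign of \<open>y\<^sub>0\<close>), with a fixed bump \<open>\<chi>\<close> of radius \<open>\<delta>/2\<close>, and \<open>f' = 0\<close>
  elsewhere. Locally \<open>f'\<close> is a single product, whose derivatives are sums of terms
  \<open>y\<^sup>e \<chi>\<^sup>(\<^sup>j\<^sup>) D\<^sup>\<gamma>f\<^sub>m\<close>. On the support \<open>y\<^sub>0\<^sup>2\<close> is bounded by \<open>|k|\<^sup>2\<close> plus \<open>O(m\<^sup>2)\<close>, so each
  Schwartz seminorm of \<open>f'\<close> is bounded by finitely many seminorms of \<open>(f\<^sup>+, f\<^sup>-)\<close>.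
\<close>

section \<open>The sequence \<open>q\<^sub>m\<close>\<close>

lemma qseq_odd_THE:
  "qseq S c (2*j+1) = (THE q. real j * pi / S < q \<and> q < (real j + 1/2) * pi / S
                         \<and> q * tan (q * S) = 1 / c)"
proof -
  have "(2*j+1+1) div 2 = j+1" by simp
  then show ?thesis unfolding qseq_def by (simp add: algebra_simps)
qed

lemma qseq_even_THE:
  "qseq S c (2*j+2) = (THE q. (real j + 1/2) * pi / S < q \<and> q < (real j + 1) * pi / S
                         \<and> tan (q * S) / c = - q)"
proof -
  have "(2*j+2) div 2 = j+1" by simp
  then show ?thesis unfolding qseq_def by (simp add: algebra_simps)
qed

lemma arctan_mult_strict_mono:
  fixes b t1 t2 :: real
  assumes "0 \<le> t1" "t1 < t2" "0 \<le> b"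
  shows "(b + arctan t1)*t1 < (b + arctan t2)*t2"
proof -
  have a: "arctan t1 < arctan t2" using assms arctan_monotone by blast
  have a0: "0 \<le> arctan t1" using assms(1) arctan_monotone' by fastforce
  have "(b + arctan t1)*t1 \<le> (b + arctan t2)*t1"
    using a assms(1) by (intro mult_right_mono) auto
  also have "\<dots> < (b + arctan t2)*t2"
    using a a0 assms by (intro mult_strict_left_mono) linarith+
  finally show ?thesis .
qed

lemma arctan_mult_inj:
  fixes b t1 t2 :: real
  assumes "0 \<le> t1" "0 \<le> t2" "0 \<le> b" "(b + arctan t1)*t1 = (b + arctan t2)*t2"
  shows "t1 = t2"
  using arctan_mult_strict_mono[of t1 t2 b] arctan_mult_strict_mono[of t2 t1 b] assms
  by (cases "t1 < t2"; cases "t2 < t1") auto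

lemma qseq_odd_arctan:
  assumes S: "S > 0" and c: "c > 0"
  shows "\<exists>t>0. (real j*pi + arctan t)*t = S/c \<and> qseq S c (2*j+1) = (real j*pi + arctan t)/S"
proof -
  define T where "T = 1 + 4*S/(c*pi)"
  have T1: "T \<ge> 1" using S c by (simp add: T_def)
  have "arctan T \<ge> pi/4" using arctan_monotone'[OF T1] arctan_one by simp
  moreover have "0 \<le> real j * pi" by simp
  ultimately have "(real j*pi + arctan T)*T \<ge> pi/4 * T"
    using T1 by (intro mult_right_mono) linarith+
  moreover have "pi/4*T \<ge> S/c" using S c by (simp add: T_def field_simps)
  ultimately have hT: "(real j*pi + arctan T)*T \<ge> S/c" by linarith
  have "\<exists>t. 0 \<le> t \<and> t \<le> T \<and> (real j*pi + arctan t)*t = S/c"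
    apply (rule IVT)
    using hT T1 S c by (auto intro!: continuous_intros)
  then obtain t where t: "0 \<le> t" "(real j*pi + arctan t)*t = S/c" by blast
  have tpos: "t > 0" using t S c by (cases "t = 0") auto
  define Q where "Q q \<longleftrightarrow> real j * pi / S < q \<and> q < (real j + 1/2) * pi / S \<and> q * tan (q * S) = 1 / c" for q
  have tanq: "tan ((real j*pi + arctan t)/S * S) = t"
    using S tan_periodic_nat[of "arctan t" j] by (simp add: tan_arctan add.commute)
  have Q1: "Q ((real j*pi + arctan t)/S)"
    unfolding Q_def tanq
    using S c t tpos arctan_ubound[of t] by (auto simp: field_simps)
  have Qu: "q = (real j*pi + arctan t)/S" if "Q q" for q
  proof -
    define u where "u = q*S - real j * pi"
    have u: "0 < u" "u < pi/2" using that S unfolding Q_def u_def by (auto simp: field_simps)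
    have tq: "tan (q*S) = tan u"
      using tan_periodic_nat[of u j] unfolding u_def by simp
    have tu: "tan u > 0" using u by (simp add: tan_gt_zero)
    have au: "arctan (tan u) = u" using u by (intro arctan_tan) auto
    have qe: "q = (real j*pi + arctan (tan u))/S" using au S unfolding u_def by (simp add: field_simps)
    have "q * tan u = 1/c" using that tq unfolding Q_def by simp
    hence "(real j*pi + arctan (tan u))*tan u = S/c" using qe S by (simp add: field_simps)
    hence "tan u = t" using arctan_mult_inj[of "tan u" t "real j * pi"] t tu by simp
    with qe show ?thesis by simp
  qed
  have "qseq S c (2*j+1) = (real j*pi + arctan t)/S"
    unfolding qseq_odd_THE Q_def[symmetric]
    by (rule the1_equality) (use Q1 Qu in blast)+
  with t tpos show ?thesis by blast
qed

lemma plus_arctan_inj: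
  fixes t1 t2 K A :: real
  assumes "A > 0" "t1 - A*(K - arctan t1) = t2 - A*(K - arctan t2)"
  shows "t1 = t2"
proof (rule ccontr)
  assume "t1 \<noteq> t2"
  then consider "t1 < t2" | "t2 < t1" by linarith
  then show False
  proof cases
    case 1
    then have "arctan t1 < arctan t2" by (rule arctan_monotone)
    then have "A * arctan t1 < A * arctan t2" using assms by simp
    moreover have "t1 + A*arctan t1 = t2 + A*arctan t2" using assms(2) by (simp add: algebra_simps)
    ultimately show False using 1 by linarith
  next
    case 2
    then have "arctan t2 < arctan t1" by (rule arctan_monotone)
    then have "A * arctan t2 < A * arctan t1" using assms by simp
    moreover have "t1 + A*arctan t1 = t2 + A*arctan t2" using assms(2) by (simp add: algebra_simps)
    ultimately show False using 2 by linarith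
  qed
qed

lemma qseq_even_arctan:
  assumes S: "S > 0" and c: "c > 0"
  shows "\<exists>t>0. t = c/S*((real j+1)*pi - arctan t) \<and> qseq S c (2*j+2) = ((real j+1)*pi - arctan t)/S"
proof -
  define T where "T = c/S*(real j+1)*pi"
  have T0: "T \<ge> 0" using S c by (simp add: T_def)
  have "arctan T \<ge> 0" using T0 arctan_monotone'[OF T0] by simp
  hence hT: "T - c/S*((real j+1)*pi - arctan T) \<ge> 0" using S c by (simp add: T_def algebra_simps)
  have h0: "0 - c/S*((real j+1)*pi - arctan 0) \<le> 0" using S c by simp
  have "\<exists>t. 0 \<le> t \<and> t \<le> T \<and> t - c/S*((real j+1)*pi - arctan t) = 0"
    apply (rule IVT[OF h0 hT T0])
    using S by (auto intro!: continuous_intros)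
  then obtain t where t: "0 \<le> t" "t - c/S*((real j+1)*pi - arctan t) = 0" by blast
  have tpos: "t > 0" using t S c by (cases "t = 0") auto
  define Q where "Q q \<longleftrightarrow> (real j + 1/2) * pi / S < q \<and> q < (real j + 1) * pi / S \<and> tan (q * S) / c = - q" for q
  have tanq: "tan (((real j+1)*pi - arctan t)/S * S) = - t"
  proof -
    have "((real j+1)*pi - arctan t)/S * S = - arctan t + real (Suc j) * pi" using S by simp
    then show ?thesis by (simp only: tan_periodic_nat tan_minus tan_arctan)
  qed
  have Q1: "Q (((real j+1)*pi - arctan t)/S)"
    unfolding Q_def tanq
    using S c t tpos arctan_ubound[of t] arctan_monotone[of 0 t] by (auto simp: field_simps)
  have Qu: "q = ((real j+1)*pi - arctan t)/S" if "Q q" for q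
  proof -
    define v where "v = (real j + 1) * pi - q*S"
    have v: "0 < v" "v < pi/2" using that S unfolding Q_def v_def by (auto simp: field_simps)
    have "q*S = - v + real (Suc j) * pi" unfolding v_def by simp
    hence tq: "tan (q*S) = - tan v" by (simp only: tan_periodic_nat tan_minus)
    have av: "arctan (tan v) = v" using v by (intro arctan_tan) auto
    have qe: "q = ((real j+1)*pi - arctan (tan v))/S" using av S unfolding v_def by (simp add: field_simps)
    have "tan v = c * q" using that tq c unfolding Q_def by (simp add: field_simps)
    hence "tan v - c/S*((real j+1)*pi - arctan (tan v)) = 0" using qe S by (simp add: field_simps)
    hence "tan v = t" using plus_arctan_inj[of "c/S" "tan v" "(real j+1)*pi" t] t S c by simp
    with qe show ?thesis by simp
  qed
  have "qseq S c (2*j+2) = ((real j+1)*pi - arctan t)/S"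
    unfolding qseq_even_THE Q_def[symmetric]
    by (rule the1_equality) (use Q1 Qu in blast)+
  with t tpos show ?thesis by auto
qed

text \<open>
  By the bounds below, \<open>q\<^sub>2\<^sub>j\<^sub>+\<^sub>1\<close> lies in \<open>(j\<pi>, j\<pi> + arctan(1 + 4S/(c\<pi>))]/S\<close> and \<open>q\<^sub>2\<^sub>j\<^sub>+\<^sub>2\<close>
  in \<open>((j+1/2)\<pi>, (j+1)\<pi> - arctan(c\<pi>/(2S))]/S\<close>; \<open>qseq_gap\<close> is the smallest gap between these intervals.
\<close>
definition qseq_gap :: "real \<Rightarrow> real \<Rightarrow> real" where
  "qseq_gap S c = min (min ((pi/2 - arctan (1 + 4*S/(c*pi)))/S) (arctan (c*pi/(2*S))/S)) (qseq S c 1)"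

lemma qseq_0: "qseq S c 0 = 0" by (simp add: qseq_def)

lemma qseq_odd_bounds:
  assumes S: "S > 0" and c: "c > 0"
  shows "real j*pi/S < qseq S c (2*j+1) \<and> qseq S c (2*j+1) \<le> (real j*pi + arctan (1 + 4*S/(c*pi)))/S"
proof -
  obtain t where t: "t>0" "(real j*pi + arctan t)*t = S/c" "qseq S c (2*j+1) = (real j*pi + arctan t)/S"
    using qseq_odd_arctan[OF S c] by blast
  define T0 where "T0 = 1 + 4*S/(c*pi)"
  have "t < T0"
  proof (rule ccontr)
    assume "\<not> t < T0"
    hence tT: "t \<ge> T0" by simp
    have T1: "T0 \<ge> 1" using S c by (simp add: T0_def)
    have "arctan t \<ge> pi/4" using arctan_monotone'[of 1 t] tT T1 arctan_one by simp
    moreover have "0 \<le> real j * pi" by simp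
    ultimately have "(real j*pi + arctan t)*t \<ge> pi/4 * t"
      using t by (intro mult_right_mono) linarith+
    moreover have "pi/4*t \<ge> pi/4*T0" using tT by simp
    moreover have "pi/4*T0 > S/c" using S c by (simp add: T0_def field_simps)
    ultimately show False using t by linarith
  qed
  hence "arctan t \<le> arctan T0" by (simp add: arctan_le_iff)
  moreover have "arctan t > 0" using t arctan_monotone[of 0 t] by simp
  ultimately show ?thesis using t S unfolding T0_def by (auto simp: field_simps)
qed

lemma qseq_even_bounds:
  assumes S: "S > 0" and c: "c > 0"
  shows "(real j + 1/2)*pi/S < qseq S c (2*j+2) \<and> qseq S c (2*j+2) \<le> ((real j+1)*pi - arctan (c*pi/(2*S)))/S"
proof -
  obtain t where t: "t>0" "t = c/S*((real j+1)*pi - arctan t)" "qseq S c (2*j+2) = ((real j+1)*pi - arctan t)/S"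
    using qseq_even_arctan[OF S c] by blast
  have e1: "(real j+1)*pi = real j*pi + pi" by (simp add: algebra_simps)
  have e2: "real j * pi \<ge> 0" by simp
  have X: "(real j+1)*pi - arctan t \<ge> pi/2" using arctan_ubound[of t] e1 e2 by linarith
  have "c/S*(pi/2) \<le> c/S*((real j+1)*pi - arctan t)" using X S c by (intro mult_left_mono) auto
  hence "t \<ge> c/S*(pi/2)" using t(2) by linarith
  hence "arctan t \<ge> arctan (c*pi/(2*S))" by (simp add: arctan_le_iff)
  moreover have "arctan t < pi/2" by (rule arctan_ubound)
  ultimately show ?thesis using t S by (auto simp: field_simps)
qed

lemma qseq_1_pos: assumes "S > 0" "c > 0" shows "qseq S c 1 > 0"
  using qseq_odd_bounds[OF assms, of 0] by simp

lemma qseq_gap_pos: assumes S: "S > 0" and c: "c > 0" shows "qseq_gap S c > 0"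
proof -
  have "arctan (1 + 4*S/(c*pi)) < pi/2" by (rule arctan_ubound)
  moreover have "arctan (c*pi/(2*S)) > 0" using S c arctan_monotone[of 0 "c*pi/(2*S)"] by simp
  ultimately show ?thesis using qseq_1_pos[OF assms] S unfolding qseq_gap_def by auto
qed

lemma nat_0_odd_even_cases:
  fixes m :: nat
  obtains "m = 0" | j where "m = 2*j+1" | j where "m = 2*j+2"
proof -
  have "m = 0 \<or> (\<exists>j. m = 2*j+1) \<or> (\<exists>j. m = 2*j+2)" by presburger
  then show ?thesis using that by blast
qed

lemma qseq_Suc_ge: assumes S: "S > 0" and c: "c > 0" shows "qseq S c (Suc m) \<ge> qseq S c m + qseq_gap S c"
proof (cases m rule: nat_0_odd_even_cases)
  case 1
  then show ?thesis by (simp add: qseq_0 qseq_gap_def)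
next
  case (2 j)
  have sm: "Suc m = 2*j+2" using 2 by simp
  have a: "qseq_gap S c \<le> (pi/2 - arctan (1 + 4*S/(c*pi)))/S" by (simp add: qseq_gap_def)
  have b: "(pi/2 - arctan (1 + 4*S/(c*pi)))/S = (real j + 1/2)*pi/S - (real j*pi + arctan (1 + 4*S/(c*pi)))/S"
    using S by (simp add: field_simps)
  show ?thesis using sm 2 qseq_odd_bounds[OF S c, of j] qseq_even_bounds[OF S c, of j] a b by simp
next
  case (3 j)
  have sm: "Suc m = 2*(j+1)+1" using 3 by simp
  have a: "qseq_gap S c \<le> arctan (c*pi/(2*S))/S" by (simp add: qseq_gap_def)
  have b: "arctan (c*pi/(2*S))/S = real (j+1)*pi/S - ((real j+1)*pi - arctan (c*pi/(2*S)))/S"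
    using S by (simp add: field_simps)
  show ?thesis using sm 3 qseq_odd_bounds[OF S c, of "j+1"] qseq_even_bounds[OF S c, of j] a b by simp
qed

lemma qseq_nonneg: assumes S: "S > 0" and c: "c > 0" shows "qseq S c m \<ge> 0"
proof (induction m)
  case 0 then show ?case by (simp add: qseq_0)
next
  case (Suc m) then show ?case using qseq_Suc_ge[OF S c, of m] qseq_gap_pos[OF S c] by linarith
qed

lemma qseq_le_linear: assumes S: "S > 0" and c: "c > 0" shows "qseq S c m \<le> (real m + 1)*pi/S"
proof (cases m rule: nat_0_odd_even_cases)
  case 1 then show ?thesis using S by (simp add: qseq_0)
next
  case (2 j)
  have "arctan (1 + 4*S/(c*pi)) < pi/2" by (rule arctan_ubound)
  moreover have "real j * pi \<ge> 0" by simp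
  moreover have "(real m + 1)*pi = 2 * (real j * pi) + 2*pi" using 2 by (simp add: algebra_simps)
  ultimately have "(real j*pi + arctan (1 + 4*S/(c*pi))) \<le> (real m + 1)*pi"
    using pi_gt_zero by linarith
  hence "(real j*pi + arctan (1 + 4*S/(c*pi)))/S \<le> (real m + 1)*pi/S"
    using S by (simp add: divide_right_mono)
  then show ?thesis using qseq_odd_bounds[OF S c, of j] 2 by simp
next
  case (3 j)
  have "arctan (c*pi/(2*S)) > 0" using S c arctan_monotone[of 0 "c*pi/(2*S)"] by simp
  moreover have "real j * pi \<ge> 0" by simp
  moreover have "(real m + 1)*pi = 2 * (real j * pi) + 3*pi" using 3 by (simp add: algebra_simps)
  ultimately have "((real j+1)*pi - arctan (c*pi/(2*S))) \<le> (real m + 1)*pi"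
    using pi_gt_zero by (simp add: algebra_simps)
  hence "((real j+1)*pi - arctan (c*pi/(2*S)))/S \<le> (real m + 1)*pi/S"
    using S by (simp add: divide_right_mono)
  then show ?thesis using qseq_even_bounds[OF S c, of j] 3 by simp
qed

lemma qseq_add_ge: assumes S: "S > 0" and c: "c > 0"
  shows "qseq S c (m + k) \<ge> qseq S c m + real k * qseq_gap S c"
proof (induction k)
  case 0 then show ?case by simp
next
  case (Suc k) then show ?case using qseq_Suc_ge[OF S c, of "m+k"] by (simp add: algebra_simps)
qed

lemma qseq_sq_separated: assumes S: "S > 0" and c: "c > 0" and "m \<noteq> m'"
  shows "\<bar>(qseq S c m)\<^sup>2 - (qseq S c m')\<^sup>2\<bar> \<ge> (qseq_gap S c)\<^sup>2"
proof -
  have key: "(qseq S c b)\<^sup>2 - (qseq S c a)\<^sup>2 \<ge> (qseq_gap S c)\<^sup>2" if "a < b" for a b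
  proof -
    obtain k where k: "b = a + Suc k" using \<open>a < b\<close> less_iff_Suc_add by (metis add.commute add_Suc)
    have g: "qseq_gap S c > 0" by (rule qseq_gap_pos[OF S c])
    have h1: "qseq S c b \<ge> qseq S c a + real (Suc k) * qseq_gap S c" using qseq_add_ge[OF S c, of a "Suc k"] k by simp
    have "real (Suc k) * qseq_gap S c \<ge> qseq_gap S c" using g by simp
    hence h2: "qseq S c b - qseq S c a \<ge> qseq_gap S c" using h1 by linarith
    have h3: "qseq S c b + qseq S c a \<ge> qseq_gap S c" using h2 qseq_nonneg[OF S c, of a] by linarith
    have "(qseq S c b)\<^sup>2 - (qseq S c a)\<^sup>2 = (qseq S c b - qseq S c a)*(qseq S c b + qseq S c a)"
      by (simp add: power2_eq_square algebra_simps)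
    also have "\<dots> \<ge> qseq_gap S c * qseq_gap S c" using h2 h3 g by (intro mult_mono) auto
    finally show ?thesis by (simp add: power2_eq_square)
  qed
  show ?thesis
  proof (cases "m < m'")
    case True then show ?thesis using key[OF True] by linarith
  next
    case False then have "m' < m" using assms(3) by linarith
    then show ?thesis using key[of m' m] by linarith
  qed
qed

section \<open>Smooth functions and a bump function\<close>

coinductive smooth :: "(real \<Rightarrow> real) \<Rightarrow> bool" where
  smoothI: "(\<And>x. (f has_real_derivative f' x) (at x)) \<Longrightarrow> smooth f' \<Longrightarrow> smooth f"

lemma smooth_coinduct_exists:
  assumes "X h" "\<And>h. X h \<Longrightarrow> \<exists>h'. (\<forall>x. (h has_real_derivative h' x) (at x)) \<and> X h'"
  shows "smooth h"
  using assms(1) by (rule smooth.coinduct) (use assms(2) in blast)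

lemma smooth_deriv:
  assumes "smooth f"
  shows "(f has_real_derivative deriv f x) (at x)" "smooth (deriv f)"
proof -
  from assms obtain f' where f': "\<And>x. (f has_real_derivative f' x) (at x)" "smooth f'"
    by (cases rule: smooth.cases) auto
  have "deriv f = f'" using f'(1) by (intro ext DERIV_imp_deriv) auto
  then show "(f has_real_derivative deriv f x) (at x)" "smooth (deriv f)" using f' by auto
qed

lemma smooth_const: "smooth (\<lambda>x. a)"
  by (rule smooth_coinduct_exists[where X="\<lambda>f. \<exists>a. f = (\<lambda>x. a)"]) (auto intro!: exI[of _ "\<lambda>x. 0"])

text \<open>
  Smoothness of products and compositions is proved coinductively for finite sums of
  products, a class that is closed under differentiation.
\<close>
definition smooth_pairs :: "((real \<Rightarrow> real) \<times> (real \<Rightarrow> real)) list \<Rightarrow> bool" where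
  "smooth_pairs L \<longleftrightarrow> (\<forall>(f,g)\<in>set L. smooth f \<and> smooth g)"

definition sum_prods :: "((real \<Rightarrow> real) \<times> (real \<Rightarrow> real)) list \<Rightarrow> real \<Rightarrow> real" where
  "sum_prods L x = (\<Sum>(f,g)\<leftarrow>L. f x * g x)"

definition diff_prods :: "((real \<Rightarrow> real) \<times> (real \<Rightarrow> real)) list \<Rightarrow> ((real \<Rightarrow> real) \<times> (real \<Rightarrow> real)) list" where
  "diff_prods L = concat (map (\<lambda>(f,g). [(deriv f, g), (f, deriv g)]) L)"

lemma smooth_pairs_Cons [simp]: "smooth_pairs ((f,g) # L) \<longleftrightarrow> smooth f \<and> smooth g \<and> smooth_pairs L"
  by (simp add: smooth_pairs_def)

lemma sum_prods_deriv:
  "smooth_pairs L \<Longrightarrow> (sum_prods L has_real_derivative sum_prods (diff_prods L) x) (at x)"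
proof (induction L)
  case Nil then show ?case by (simp add: sum_prods_def diff_prods_def)
next
  case (Cons a L)
  obtain f g where a: "a = (f,g)" by force
  have "sum_prods (a # L) = (\<lambda>x. f x * g x + sum_prods L x)"
    and "sum_prods (diff_prods (a # L)) x = deriv f x * g x + f x * deriv g x + sum_prods (diff_prods L) x"
    using a by (auto simp: sum_prods_def diff_prods_def)
  with Cons a show ?case
    using smooth_deriv(1)[of f x] smooth_deriv(1)[of g x] by (auto intro!: derivative_eq_intros)
qed

lemma smooth_sum_prods:
  assumes "smooth_pairs L"
  shows "smooth (sum_prods L)"
proof (rule smooth_coinduct_exists[where X="\<lambda>h. \<exists>L. h = sum_prods L \<and> smooth_pairs L"])
  fix h assume "\<exists>L. h = sum_prods L \<and> smooth_pairs L"
  then obtain L where L: "h = sum_prods L" "smooth_pairs L" by blast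
  moreover have "smooth_pairs (diff_prods L)"
    using L(2) smooth_deriv(2) by (fastforce simp: smooth_pairs_def diff_prods_def)
  ultimately show "\<exists>h'. (\<forall>x. (h has_real_derivative h' x) (at x)) \<and> (\<exists>L. h' = sum_prods L \<and> smooth_pairs L)"
    using sum_prods_deriv by blast
qed (use assms in blast)

lemma smooth_mult: "smooth f \<Longrightarrow> smooth g \<Longrightarrow> smooth (\<lambda>x. f x * g x)"
  using smooth_sum_prods[of "[(f,g)]"] by (simp add: sum_prods_def[abs_def] smooth_pairs_def)

lemma smooth_add: "smooth f \<Longrightarrow> smooth g \<Longrightarrow> smooth (\<lambda>x. f x + g x)"
  using smooth_sum_prods[of "[(f,\<lambda>x. 1),(g,\<lambda>x. 1)]"] smooth_const
  by (simp add: sum_prods_def[abs_def] smooth_pairs_def)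

definition sum_comp_prods :: "(real \<Rightarrow> real) \<Rightarrow> ((real \<Rightarrow> real) \<times> (real \<Rightarrow> real)) list \<Rightarrow> real \<Rightarrow> real" where
  "sum_comp_prods w L x = (\<Sum>(k,p)\<leftarrow>L. k (w x) * p x)"

definition diff_comp_prods ::
  "(real \<Rightarrow> real) \<Rightarrow> ((real \<Rightarrow> real) \<times> (real \<Rightarrow> real)) list \<Rightarrow> ((real \<Rightarrow> real) \<times> (real \<Rightarrow> real)) list"
where
  "diff_comp_prods w L = concat (map (\<lambda>(k,p). [(deriv k, \<lambda>x. deriv w x * p x), (k, deriv p)]) L)"

lemma sum_comp_prods_deriv:
  assumes w: "smooth w"
  shows "smooth_pairs L \<Longrightarrow> (sum_comp_prods w L has_real_derivative sum_comp_prods w (diff_comp_prods w L) x) (at x)"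
proof (induction L)
  case Nil then show ?case by (simp add: sum_comp_prods_def diff_comp_prods_def)
next
  case (Cons a L)
  obtain f g where a: "a = (f,g)" by force
  have "sum_comp_prods w (a # L) = (\<lambda>x. f (w x) * g x + sum_comp_prods w L x)"
    and "sum_comp_prods w (diff_comp_prods w (a # L)) x
           = deriv f (w x) * (deriv w x * g x) + f (w x) * deriv g x + sum_comp_prods w (diff_comp_prods w L) x"
    using a by (auto simp: sum_comp_prods_def diff_comp_prods_def)
  moreover have "((\<lambda>x. f (w x)) has_real_derivative deriv f (w x) * deriv w x) (at x)"
    using Cons a DERIV_chain2[OF smooth_deriv(1) smooth_deriv(1)[OF w]] by simp
  ultimately show ?case using Cons a smooth_deriv(1)[of g x]
    by (auto intro!: derivative_eq_intros simp: algebra_simps)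
qed

lemma smooth_sum_comp_prods:
  assumes w: "smooth w" and "smooth_pairs L"
  shows "smooth (sum_comp_prods w L)"
proof (rule smooth_coinduct_exists[where X="\<lambda>h. \<exists>L. h = sum_comp_prods w L \<and> smooth_pairs L"])
  fix h assume "\<exists>L. h = sum_comp_prods w L \<and> smooth_pairs L"
  then obtain L where L: "h = sum_comp_prods w L" "smooth_pairs L" by blast
  moreover have "smooth_pairs (diff_comp_prods w L)"
    using L(2) smooth_deriv(2) smooth_mult[OF smooth_deriv(2)[OF w]]
    by (fastforce simp: smooth_pairs_def diff_comp_prods_def)
  ultimately show "\<exists>h'. (\<forall>x. (h has_real_derivative h' x) (at x)) \<and> (\<exists>L. h' = sum_comp_prods w L \<and> smooth_pairs L)"
    using sum_comp_prods_deriv[OF w] by blast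
qed (use assms in blast)

lemma smooth_comp: "smooth k \<Longrightarrow> smooth w \<Longrightarrow> smooth (\<lambda>x. k (w x))"
  using smooth_sum_comp_prods[of w "[(k, \<lambda>x. 1)]"] smooth_const
  by (simp add: sum_comp_prods_def[abs_def] smooth_pairs_def)

lemma smooth_id: "smooth (\<lambda>x. x)"
  by (rule smoothI[of _ "\<lambda>x. 1"]) (auto intro!: derivative_eq_intros smooth_const)

lemma tendsto_poly_div_exp_0: "((\<lambda>y. poly P y / exp y) \<longlongrightarrow> (0::real)) at_top"
proof -
  have "((\<lambda>y. \<Sum>i\<le>degree P. coeff P i * (y ^ i / exp y)) \<longlongrightarrow> (\<Sum>i\<le>degree P. coeff P i * 0)) at_top"
    by (intro tendsto_sum tendsto_mult tendsto_const tendsto_power_div_exp_0)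
  moreover have "(\<lambda>y. \<Sum>i\<le>degree P. coeff P i * (y ^ i / exp y)) = (\<lambda>y. poly P y / exp y)"
    by (auto simp: poly_altdef sum_divide_distrib fun_eq_iff)
  ultimately show ?thesis by simp
qed

definition flat_exp :: "real poly \<Rightarrow> real \<Rightarrow> real" where
  "flat_exp P t = (if t \<le> 0 then 0 else poly P (1/t) * exp (-1/t))"

definition flat_exp_poly :: "real poly \<Rightarrow> real poly" where
  "flat_exp_poly P = [:0,0,1:] * (P - pderiv P)"

lemma flat_exp_deriv_at_0: "(flat_exp P has_real_derivative 0) (at 0)"
proof -
  have l: "((\<lambda>h. (flat_exp P (0 + h) - flat_exp P 0) / h) \<longlongrightarrow> 0) (at_left 0)"
  proof -
    have ev: "eventually (\<lambda>h. (flat_exp P (0 + h) - flat_exp P 0) / h = 0) (at_left (0::real))"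
      unfolding eventually_at_left_field by (intro exI[of _ "-1"]) (auto simp: flat_exp_def)
    show ?thesis using tendsto_cong[OF ev] by simp
  qed
  have r: "((\<lambda>h. (flat_exp P (0 + h) - flat_exp P 0) / h) \<longlongrightarrow> 0) (at_right 0)"
  proof -
    have lim: "((\<lambda>y. poly ([:0,1:] * P) y / exp y) \<longlongrightarrow> 0) at_top" by (rule tendsto_poly_div_exp_0)
    have "((\<lambda>h. poly ([:0,1:] * P) (inverse h) / exp (inverse h)) \<longlongrightarrow> 0) (at_right 0)"
      using filterlim_compose[OF lim filterlim_inverse_at_top_right] by (simp add: o_def)
    moreover have "eventually (\<lambda>h. poly ([:0,1:] * P) (inverse h) / exp (inverse h)
        = (flat_exp P (0 + h) - flat_exp P 0) / h) (at_right (0::real))"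
      unfolding eventually_at_right_field
      by (intro exI[of _ 1]) (auto simp: flat_exp_def exp_minus field_simps)
    ultimately show ?thesis by (rule tendsto_cong[THEN iffD1, rotated])
  qed
  have "((\<lambda>h. (flat_exp P (0 + h) - flat_exp P 0) / h) \<longlongrightarrow> 0) (at 0)"
    using l r by (rule filterlim_split_at)
  then show ?thesis by (simp add: DERIV_def)
qed

lemma flat_exp_deriv: "(flat_exp P has_real_derivative flat_exp (flat_exp_poly P) t) (at t)"
proof -
  consider "t < 0" | "t = 0" | "t > 0" by linarith
  then show ?thesis
  proof cases
    case 1
    have "((\<lambda>x. 0) has_real_derivative flat_exp (flat_exp_poly P) t) (at t)" using 1 by (simp add: flat_exp_def)
    then show ?thesis
      by (rule has_field_derivative_transform_within_open[where S="{..<0}"]) (use 1 in \<open>auto simp: flat_exp_def\<close>)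
  next
    case 3
    have d: "((\<lambda>x. poly P (1/x) * exp (-1/x)) has_real_derivative
        poly (pderiv P) (1/t) * (-1/t^2) * exp (-1/t) + poly P (1/t) * (exp (-1/t) * (1/t^2))) (at t)"
      using 3 by (auto intro!: derivative_eq_intros DERIV_chain2[OF poly_DERIV] simp: power2_eq_square field_simps)
    have "poly (pderiv P) (1/t) * (-1/t^2) * exp (-1/t) + poly P (1/t) * (exp (-1/t) * (1/t^2))
        = flat_exp (flat_exp_poly P) t"
      using 3 by (simp add: flat_exp_def flat_exp_poly_def algebra_simps power2_eq_square)
    with d have "((\<lambda>x. poly P (1/x) * exp (-1/x)) has_real_derivative flat_exp (flat_exp_poly P) t) (at t)" by simp
    then show ?thesis
      by (rule has_field_derivative_transform_within_open[where S="{0<..}"]) (use 3 in \<open>auto simp: flat_exp_def\<close>)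
  next
    case 2
    then show ?thesis using flat_exp_deriv_at_0 by (simp add: flat_exp_def)
  qed
qed

lemma smooth_flat_exp: "smooth (flat_exp P)"
  by (rule smooth_coinduct_exists[where X="\<lambda>h. \<exists>P. h = flat_exp P"]) (use flat_exp_deriv in blast)+

definition bump :: "real \<Rightarrow> real \<Rightarrow> real" where
  "bump r t = flat_exp 1 (1 - t^2/r^2) * exp 1"

definition bump_deriv :: "real \<Rightarrow> nat \<Rightarrow> real \<Rightarrow> real" where
  "bump_deriv r j = (deriv ^^ j) (bump r)"

lemma smooth_bump: "smooth (bump r)"
proof -
  have w: "smooth (\<lambda>t. 1 + (-1/r^2) * (t * t))"
    by (intro smooth_add smooth_mult smooth_const smooth_id)
  have "smooth (\<lambda>t. flat_exp 1 (1 + (-1/r^2) * (t * t)) * exp 1)"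
    by (intro smooth_mult smooth_comp[OF smooth_flat_exp w] smooth_const)
  moreover have "(\<lambda>t. flat_exp 1 (1 + (-1/r^2) * (t * t)) * exp 1) = bump r"
    by (auto simp: bump_def fun_eq_iff power2_eq_square)
  ultimately show ?thesis by simp
qed

lemma smooth_bump_deriv: "smooth (bump_deriv r j)"
  by (induction j) (auto simp: bump_deriv_def smooth_bump smooth_deriv(2))

lemma bump_deriv_Suc: "bump_deriv r (Suc j) = deriv (bump_deriv r j)"
  by (simp add: bump_deriv_def)

lemma bump_deriv_deriv: "(bump_deriv r j has_real_derivative bump_deriv r (Suc j) x) (at x)"
  using smooth_deriv(1)[OF smooth_bump_deriv[of r j]] by (simp add: bump_deriv_Suc)

lemma bump_at_0: "r \<noteq> 0 \<Longrightarrow> bump r 0 = 1"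
  by (simp add: bump_def flat_exp_def exp_minus)

lemma bump_deriv_eq_0_gt: assumes r: "r > 0" shows "\<bar>t\<bar> > r \<Longrightarrow> bump_deriv r j t = 0"
proof (induction j arbitrary: t)
  case 0
  have "r * r < \<bar>t\<bar> * \<bar>t\<bar>" using 0 r by (intro mult_strict_mono) auto
  hence "t^2 > r^2" by (simp add: power2_eq_square)
  hence "1 - t^2/r^2 \<le> 0" using r by (simp add: field_simps)
  then show ?case by (simp add: bump_deriv_def bump_def flat_exp_def)
next
  case (Suc j)
  have "((\<lambda>x. 0) has_real_derivative 0) (at t)" by simp
  hence "(bump_deriv r j has_real_derivative 0) (at t)"
    by (rule has_field_derivative_transform_within_open[where S="{x. \<bar>x\<bar> > r}"])
       (use Suc in \<open>auto intro!: open_Collect_less continuous_intros\<close>)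
  then show ?case using DERIV_unique[OF bump_deriv_deriv[of r j t]] by simp
qed

lemma bump_deriv_eq_0: assumes r: "r > 0" and t: "\<bar>t\<bar> \<ge> r" shows "bump_deriv r j t = 0"
proof (cases "\<bar>t\<bar> > r")
  case True then show ?thesis using bump_deriv_eq_0_gt[OF r] by blast
next
  case False
  hence tr: "t = r \<or> t = -r" using t by linarith
  have cont: "isCont (bump_deriv r j) t" using bump_deriv_deriv by (rule DERIV_isCont)
  show ?thesis
  proof (cases "t = r")
    case True
    have l1: "(bump_deriv r j \<longlongrightarrow> bump_deriv r j t) (at_right t)" using cont by (simp add: isCont_def filterlim_at_split)
    have ev: "eventually (\<lambda>x. bump_deriv r j x = 0) (at_right t)"
      unfolding eventually_at_right_field using True r by (intro exI[of _ "r+1"]) (auto intro!: bump_deriv_eq_0_gt)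
    have "(bump_deriv r j \<longlongrightarrow> 0) (at_right t)" using tendsto_cong[OF ev] by simp
    then show ?thesis using tendsto_unique[OF trivial_limit_at_right_real l1] by simp
  next
    case False
    hence tm: "t = -r" using tr by simp
    have l1: "(bump_deriv r j \<longlongrightarrow> bump_deriv r j t) (at_left t)" using cont by (simp add: isCont_def filterlim_at_split)
    have ev: "eventually (\<lambda>x. bump_deriv r j x = 0) (at_left t)"
      unfolding eventually_at_left_field using tm r by (intro exI[of _ "-r-1"]) (auto intro!: bump_deriv_eq_0_gt)
    have "(bump_deriv r j \<longlongrightarrow> 0) (at_left t)" using tendsto_cong[OF ev] by simp
    then show ?thesis using tendsto_unique[OF trivial_limit_at_left_real l1] by simp
  qed
qed

lemma bump_deriv_bounded: assumes r: "r > 0" shows "\<exists>B\<ge>0. \<forall>t. \<bar>bump_deriv r j t\<bar> \<le> B"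
proof -
  have "continuous_on {-r..r} (bump_deriv r j)"
    using bump_deriv_deriv by (intro continuous_at_imp_continuous_on) (blast intro: DERIV_isCont)
  hence "compact (bump_deriv r j ` {-r..r})" by (intro compact_continuous_image) auto
  then obtain B where B: "\<forall>x\<in>bump_deriv r j ` {-r..r}. norm x \<le> B"
    using compact_imp_bounded bounded_iff by metis
  have "\<bar>bump_deriv r j t\<bar> \<le> max B 0" for t
  proof (cases "\<bar>t\<bar> \<ge> r")
    case True then show ?thesis using bump_deriv_eq_0[OF r True] by simp
  next
    case False
    hence "t \<in> {-r..r}" by auto
    then have "\<bar>bump_deriv r j t\<bar> \<le> B" using B by auto
    then show ?thesis by linarith
  qed
  then show ?thesis by (intro exI[of _ "max B 0"]) auto
qed

section \<open>Terms of the extension and their partial derivatives\<close>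

definition tail :: "(nat \<Rightarrow> real) \<Rightarrow> (nat \<Rightarrow> real)" where "tail y = (\<lambda>l. y (Suc l))"
definition mink :: "nat \<Rightarrow> (nat \<Rightarrow> real) \<Rightarrow> real" where "mink n y = (y 0)^2 - sqnorm n (tail y)"

text \<open>
  A triple \<open>(e, j, \<gamma>)\<close> stands for the function \<open>y \<mapsto> y\<^sup>e \<cdot> \<chi>\<^sup>(\<^sup>j\<^sup>)(mink y - a) \<cdot> (D\<^sup>\<gamma>G)(\<sigma> k)\<close>,
  where \<open>k\<close> is the spatial part of \<open>y\<close> and \<open>\<chi>\<close> the bump function. This class is closed under
  partial derivatives (product rule, \<open>diff_term\<close>), so every derivative of the extension is
  locally a finite linear combination of such terms.
\<close>
type_synonym term_data = "(nat \<Rightarrow> nat) \<times> nat \<times> nat list"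

definition shell_term :: "nat \<Rightarrow> real \<Rightarrow> real \<Rightarrow> real \<Rightarrow> ((nat\<Rightarrow>real)\<Rightarrow>complex) \<Rightarrow> term_data \<Rightarrow> (nat\<Rightarrow>real) \<Rightarrow> complex" where
 "shell_term n r a \<sigma> G t y = (case t of (e,j,\<gamma>) \<Rightarrow> if y \<in> Eucl (Suc n) then
     complex_of_real (mon (Suc n) e y * bump_deriv r j (mink n y - a)) * pds \<gamma> G (\<lambda>l. \<sigma> * y (Suc l)) else 0)"

definition eval_terms ::
  "nat \<Rightarrow> real \<Rightarrow> real \<Rightarrow> real \<Rightarrow> ((nat\<Rightarrow>real)\<Rightarrow>complex) \<Rightarrow> (real \<times> term_data) list \<Rightarrow> (nat\<Rightarrow>real) \<Rightarrow> complex"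
where
 "eval_terms n r a \<sigma> G L y = (\<Sum>(c,t)\<leftarrow>L. complex_of_real c * shell_term n r a \<sigma> G t y)"

fun diff_term :: "real \<Rightarrow> nat \<Rightarrow> real \<times> term_data \<Rightarrow> (real \<times> term_data) list" where
 "diff_term \<sigma> i (c,(e,j,\<gamma>)) = (case i of
     0 \<Rightarrow> [(c * real (e 0), (e(0 := e 0 - 1), j, \<gamma>)), (2*c, (e(0 := e 0 + 1), Suc j, \<gamma>))]
   | Suc l \<Rightarrow> [(c * real (e i), (e(i := e i - 1), j, \<gamma>)), (-2*c, (e(i := e i + 1), Suc j, \<gamma>)), (c*\<sigma>, (e, j, l#\<gamma>))])"

lemma Eucl_upd: "i < N \<Longrightarrow> y(i := t) \<in> Eucl N \<longleftrightarrow> y \<in> Eucl N"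
  by (auto simp: Eucl_def)

lemma mon_remove:
  assumes "i < N"
  shows "mon N e (y(i := t)) = t ^ e i * (\<Prod>l\<in>{..<N}-{i}. y l ^ e l)"
    and "mon N (e(i := p)) y = y i ^ p * (\<Prod>l\<in>{..<N}-{i}. y l ^ e l)"
  using assms unfolding mon_def by (subst prod.remove[of _ i]; auto intro!: prod.cong)+

lemma mon_deriv:
  assumes "i < N"
  shows "((\<lambda>t. mon N e (y(i:=t))) has_real_derivative real (e i) * mon N (e(i := e i - 1)) y) (at (y i))"
  unfolding mon_remove[OF assms] by (auto intro!: derivative_eq_intros)

lemma mon_mult_var:
  assumes "i < N"
  shows "mon N e y * y i = mon N (e(i := e i + 1)) y"
  using mon_remove(1)[OF assms, where t = "y i" and e = e and y = y]
    mon_remove(2)[OF assms, where p = "e i + 1" and e = e and y = y]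
  by simp

lemma mink_deriv:
  assumes "i < Suc n"
  shows "((\<lambda>t. mink n (y(i:=t))) has_real_derivative (if i = 0 then 2 * y 0 else -2 * y i)) (at (y i))"
proof -
  have e: "mink n (y(i:=t)) = (if i = 0 then t else y 0)^2 - (\<Sum>l<n. (if Suc l = i then t else y (Suc l))^2)" for t
    by (auto simp: mink_def sqnorm_def tail_def intro!: sum.cong)
  have d: "((\<lambda>t. (\<Sum>l<n. (if Suc l = i then t else y (Suc l))^2)) has_real_derivative
           (\<Sum>l<n. (if Suc l = i then 2 * y i else 0))) (at (y i))"
  proof (rule DERIV_sum)
    fix l assume "l \<in> {..<n}"
    show "((\<lambda>t. (if Suc l = i then t else y (Suc l))^2) has_real_derivative (if Suc l = i then 2 * y i else 0)) (at (y i))"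
      by (cases "Suc l = i") (auto intro!: derivative_eq_intros)
  qed
  have s: "(\<Sum>l<n. (if Suc l = i then 2 * y i else 0)) = (if i = 0 then 0 else 2 * y i)"
  proof (cases i)
    case 0 then show ?thesis by simp
  next
    case (Suc l0)
    then have "l0 < n" using assms by simp
    then show ?thesis using Suc
      by (simp add: sum.delta[of "{..<n}" l0 "\<lambda>_. 2 * y (Suc l0)", unfolded eq_commute[of l0]] if_distrib
          cong: if_cong)
  qed
  show ?thesis
  proof (cases "i = 0")
    case True
    with d s show ?thesis unfolding e by (auto intro!: derivative_eq_intros)
  next
    case False
    with DERIV_diff[OF DERIV_const d] s show ?thesis unfolding e by simp
  qed
qed

lemma pds_scaled_deriv:
  assumes G: "schwartz n G" and y: "y \<in> Eucl (Suc n)" and l: "l < n" and g: "set \<gamma> \<subseteq> {..<n}"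
  shows "((\<lambda>t. pds \<gamma> G (\<lambda>l'. \<sigma> * (y(Suc l:=t)) (Suc l'))) has_vector_derivative
          (\<sigma> *\<^sub>R pds (l#\<gamma>) G (\<lambda>l'. \<sigma> * y (Suc l')))) (at (y (Suc l)))"
proof -
  define x where "x = (\<lambda>l'. \<sigma> * y (Suc l'))"
  have x: "x \<in> Eucl n" using y unfolding x_def Eucl_def by auto
  have eq: "(\<lambda>l'. \<sigma> * (y(Suc l:=t)) (Suc l')) = x(l := \<sigma> * t)" for t
    by (auto simp: x_def fun_eq_iff)
  have diff: "(\<lambda>u. pds \<gamma> G (x(l := u))) differentiable (at (x l))"
    using G g x l unfolding schwartz_def by blast
  have g': "((\<lambda>u. pds \<gamma> G (x(l := u))) has_vector_derivative pds (l#\<gamma>) G x) (at (x l))"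
    using diff unfolding vector_derivative_works by (simp add: pd_def)
  have f': "((\<lambda>t. \<sigma> * t) has_vector_derivative \<sigma>) (at (y (Suc l)))"
    using has_vector_derivative_mult_right[OF has_vector_derivative_id, of \<sigma>] by simp
  have "x l = \<sigma> * y (Suc l)" by (simp add: x_def)
  with g' have g'': "((\<lambda>u. pds \<gamma> G (x(l := u))) has_vector_derivative pds (l#\<gamma>) G x) (at (\<sigma> * y (Suc l)))" by simp
  have "(((\<lambda>u. pds \<gamma> G (x(l := u))) \<circ> (\<lambda>t. \<sigma> * t)) has_vector_derivative (\<sigma> *\<^sub>R pds (l#\<gamma>) G x)) (at (y (Suc l)))"
    by (rule vector_diff_chain_at[OF f' g''])
  then show ?thesis unfolding eq by (simp add: o_def x_def)
qed

lemma weight_deriv: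
  assumes i: "i < Suc n"
  shows "((\<lambda>t. mon (Suc n) e (y(i:=t)) * bump_deriv r j (mink n (y(i:=t)) - a)) has_real_derivative
           real (e i) * mon (Suc n) (e(i := e i - 1)) y * bump_deriv r j (mink n y - a)
           + (if i = 0 then 2 else -2) * mon (Suc n) (e(i := e i + 1)) y * bump_deriv r (Suc j) (mink n y - a))
         (at (y i))"
proof -
  have "((\<lambda>t. mink n (y(i:=t)) - a) has_real_derivative (if i = 0 then 2 * y 0 else -2 * y i)) (at (y i))"
    using mink_deriv[OF i, of y] by (auto intro!: derivative_eq_intros)
  from DERIV_chain2[OF bump_deriv_deriv this]
  have db: "((\<lambda>t. bump_deriv r j (mink n (y(i:=t)) - a)) has_real_derivative
          bump_deriv r (Suc j) (mink n y - a) * (if i = 0 then 2 * y 0 else -2 * y i)) (at (y i))"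
    by simp
  have mv: "mon (Suc n) (e(i := Suc (e i))) y = mon (Suc n) e y * y i"
    using mon_mult_var[OF i] by simp
  from DERIV_mult[OF mon_deriv[OF i, of e y] db] mv show ?thesis
    by (cases "i = 0") (simp_all add: algebra_simps)
qed

lemma shell_term_deriv:
  assumes G: "schwartz n G" and i: "i < Suc n" and g: "set \<gamma> \<subseteq> {..<n}"
  shows "((\<lambda>t. shell_term n r a \<sigma> G (e,j,\<gamma>) (y(i:=t))) has_vector_derivative
          eval_terms n r a \<sigma> G (diff_term \<sigma> i (1,(e,j,\<gamma>))) y) (at (y i))"
proof (cases "y \<in> Eucl (Suc n)")
  case False
  have "shell_term n r a \<sigma> G (e,j,\<gamma>) (y(i:=t)) = 0" for t
    using False Eucl_upd[OF i] by (simp add: shell_term_def)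
  moreover have "eval_terms n r a \<sigma> G (diff_term \<sigma> i (1,(e,j,\<gamma>))) y = 0"
    using False by (cases i) (simp_all add: eval_terms_def shell_term_def)
  ultimately show ?thesis by simp
next
  case y: True
  define w where "w t = mon (Suc n) e (y(i:=t)) * bump_deriv r j (mink n (y(i:=t)) - a)" for t
  define w' where "w' = real (e i) * mon (Suc n) (e(i := e i - 1)) y * bump_deriv r j (mink n y - a)
           + (if i = 0 then 2 else -2) * mon (Suc n) (e(i := e i + 1)) y * bump_deriv r (Suc j) (mink n y - a)"
  define H where "H t = pds \<gamma> G (\<lambda>l. \<sigma> * (y(i:=t)) (Suc l))" for t
  have shell: "shell_term n r a \<sigma> G (e,j,\<gamma>) (y(i:=t)) = complex_of_real (w t) * H t" for t
    using y Eucl_upd[OF i] by (simp add: shell_term_def w_def H_def)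
  have dw: "((\<lambda>t. complex_of_real (w t)) has_vector_derivative complex_of_real w') (at (y i))"
    unfolding w_def w'_def by (rule has_vector_derivative_of_real[OF weight_deriv[OF i]])
  have wy: "w (y i) = mon (Suc n) e y * bump_deriv r j (mink n y - a)"
    and Hy: "H (y i) = pds \<gamma> G (\<lambda>l. \<sigma> * y (Suc l))"
    by (simp_all add: w_def H_def)
  show ?thesis
  proof (cases i)
    case 0
    have "(H has_vector_derivative 0) (at (y i))" unfolding H_def 0 by simp
    from has_vector_derivative_mult[OF dw this] show ?thesis
      unfolding shell using y 0 Hy by (simp add: w'_def eval_terms_def shell_term_def algebra_simps)
  next
    case (Suc l)
    have "(H has_vector_derivative \<sigma> *\<^sub>R pds (l#\<gamma>) G (\<lambda>l'. \<sigma> * y (Suc l'))) (at (y i))"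
      unfolding H_def Suc by (rule pds_scaled_deriv[OF G y _ g]) (use i Suc in simp)
    from has_vector_derivative_mult[OF dw this] show ?thesis
      unfolding shell using y Suc wy Hy
      by (simp add: w'_def eval_terms_def shell_term_def algebra_simps scaleR_conv_of_real)
  qed
qed

definition diff_terms :: "real \<Rightarrow> nat \<Rightarrow> (real \<times> term_data) list \<Rightarrow> (real \<times> term_data) list" where
  "diff_terms \<sigma> i L = concat (map (diff_term \<sigma> i) L)"

fun iter_diff_terms :: "real \<Rightarrow> nat list \<Rightarrow> (real \<times> term_data) list \<Rightarrow> (real \<times> term_data) list" where
  "iter_diff_terms \<sigma> [] L = L"
| "iter_diff_terms \<sigma> (i#js) L = diff_terms \<sigma> i (iter_diff_terms \<sigma> js L)"

definition valid_terms :: "nat \<Rightarrow> (real \<times> term_data) list \<Rightarrow> bool" where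
  "valid_terms n L \<longleftrightarrow> (\<forall>(c,(e,j,\<gamma>))\<in>set L. set \<gamma> \<subseteq> {..<n})"

lemma valid_diff_terms: assumes v: "valid_terms n L" and i: "i < Suc n" shows "valid_terms n (diff_terms \<sigma> i L)"
  unfolding valid_terms_def diff_terms_def
proof (intro ballI)
  fix p assume "p \<in> set (concat (map (diff_term \<sigma> i) L))"
  then obtain q where q: "q \<in> set L" "p \<in> set (diff_term \<sigma> i q)" by auto
  obtain c e j \<gamma> where qq: "q = (c,(e,j,\<gamma>))" by (cases q) auto
  have g: "set \<gamma> \<subseteq> {..<n}" using v q(1) qq unfolding valid_terms_def by fastforce
  show "case p of (c,e,j,\<gamma>) \<Rightarrow> set \<gamma> \<subseteq> {..<n}"
  proof (cases i)
    case 0 then show ?thesis using q(2) qq g by auto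
  next
    case (Suc l) then show ?thesis using q(2) qq g i by auto
  qed
qed

lemma valid_iter_diff_terms: "valid_terms n L \<Longrightarrow> set \<beta> \<subseteq> {..<Suc n} \<Longrightarrow> valid_terms n (iter_diff_terms \<sigma> \<beta> L)"
  by (induction \<beta>) (auto intro: valid_diff_terms)

lemma eval_terms_append: "eval_terms n r a \<sigma> G (L1 @ L2) y = eval_terms n r a \<sigma> G L1 y + eval_terms n r a \<sigma> G L2 y"
  by (simp add: eval_terms_def)

lemma eval_diff_term_scale:
  "eval_terms n r a \<sigma> G (diff_term \<sigma> i (c,t)) y
     = complex_of_real c * eval_terms n r a \<sigma> G (diff_term \<sigma> i (1,t)) y"
  by (cases t; cases i) (simp_all add: eval_terms_def algebra_simps)

lemma eval_terms_deriv:
  assumes G: "schwartz n G" and i: "i < Suc n" and v: "valid_terms n L"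
  shows "((\<lambda>t. eval_terms n r a \<sigma> G L (y(i:=t))) has_vector_derivative eval_terms n r a \<sigma> G (diff_terms \<sigma> i L) y) (at (y i))"
  using v
proof (induction L)
  case Nil then show ?case by (simp add: eval_terms_def diff_terms_def)
next
  case (Cons p L)
  obtain c e j \<gamma> where p: "p = (c,(e,j,\<gamma>))" by (cases p) auto
  have g: "set \<gamma> \<subseteq> {..<n}" using Cons.prems p by (auto simp: valid_terms_def)
  have v': "valid_terms n L" using Cons.prems by (auto simp: valid_terms_def)
  have e1: "eval_terms n r a \<sigma> G (p # L) z = complex_of_real c * shell_term n r a \<sigma> G (e,j,\<gamma>) z + eval_terms n r a \<sigma> G L z" for z
    using p by (simp add: eval_terms_def)
  have e2: "eval_terms n r a \<sigma> G (diff_terms \<sigma> i (p # L)) y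
      = complex_of_real c * eval_terms n r a \<sigma> G (diff_term \<sigma> i (1,(e,j,\<gamma>))) y + eval_terms n r a \<sigma> G (diff_terms \<sigma> i L) y"
  proof -
    have "eval_terms n r a \<sigma> G (diff_terms \<sigma> i (p # L)) y
        = eval_terms n r a \<sigma> G (diff_term \<sigma> i (c,(e,j,\<gamma>))) y + eval_terms n r a \<sigma> G (diff_terms \<sigma> i L) y"
      using p by (simp add: diff_terms_def eval_terms_append del: diff_term.simps)
    also have "eval_terms n r a \<sigma> G (diff_term \<sigma> i (c,(e,j,\<gamma>))) y
        = complex_of_real c * eval_terms n r a \<sigma> G (diff_term \<sigma> i (1,(e,j,\<gamma>))) y"
      by (rule eval_diff_term_scale)
    finally show ?thesis .
  qed
  show ?case unfolding e1 e2
    by (intro has_vector_derivative_add has_vector_derivative_mult_right shell_term_deriv[OF G i g] Cons.IH v')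
qed

lemma pd_eval_terms:
  assumes G: "schwartz n G" and i: "i < Suc n" and v: "valid_terms n L"
  shows "pd i (eval_terms n r a \<sigma> G L) = eval_terms n r a \<sigma> G (diff_terms \<sigma> i L)"
  by (rule ext) (simp add: pd_def vector_derivative_at[OF eval_terms_deriv[OF G i v]])

lemma pds_eval_terms:
  assumes G: "schwartz n G" and b: "set \<beta> \<subseteq> {..<Suc n}" and v: "valid_terms n L"
  shows "pds \<beta> (eval_terms n r a \<sigma> G L) = eval_terms n r a \<sigma> G (iter_diff_terms \<sigma> \<beta> L)"
  using b
proof (induction \<beta>)
  case Nil then show ?case by simp
next
  case (Cons i js)
  have i: "i < Suc n" and js: "set js \<subseteq> {..<Suc n}" using Cons.prems by auto
  have "pds (i#js) (eval_terms n r a \<sigma> G L) = pd i (eval_terms n r a \<sigma> G (iter_diff_terms \<sigma> js L))"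
    using Cons.IH[OF js] by simp
  also have "\<dots> = eval_terms n r a \<sigma> G (diff_terms \<sigma> i (iter_diff_terms \<sigma> js L))"
    by (rule pd_eval_terms[OF G i valid_iter_diff_terms[OF v js]])
  finally show ?case by simp
qed

lemma pds_eval_terms_differentiable:
  assumes G: "schwartz n G" and b: "set \<beta> \<subseteq> {..<Suc n}" and v: "valid_terms n L" and i: "i < Suc n"
  shows "(\<lambda>t. pds \<beta> (eval_terms n r a \<sigma> G L) (x(i := t))) differentiable (at (x i))"
  unfolding pds_eval_terms[OF G b v]
  using eval_terms_deriv[OF G i valid_iter_diff_terms[OF v b], where y=x and r=r and a=a and \<sigma>=\<sigma>]
  unfolding differentiable_def has_vector_derivative_def
  by blast

section \<open>Seminorm bounds for terms\<close>

lemma pow_sum_bound: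
  fixes x :: "nat \<Rightarrow> real"
  assumes x: "\<And>l. x l \<ge> 0"
  shows "(1 + (\<Sum>l<n. x l))^N \<le> real (n+1)^N * (1 + (\<Sum>l<n. x l ^ N))"
proof -
  define M where "M = Max (insert 1 (x ` {..<n}))"
  have M1: "1 \<le> M" unfolding M_def by simp
  have Mx: "x l \<le> M" if "l < n" for l unfolding M_def using that by simp
  have "1 + (\<Sum>l<n. x l) \<le> M + (\<Sum>l<n. M)" using M1 Mx by (intro add_mono sum_mono) auto
  also have "\<dots> = real (n+1) * M" by (simp add: algebra_simps)
  finally have s: "1 + (\<Sum>l<n. x l) \<le> real (n+1) * M" .
  have "(1 + (\<Sum>l<n. x l))^N \<le> (real (n+1) * M)^N"
  proof -
    have "0 \<le> sum x {..<n}" using x by (intro sum_nonneg) auto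
    then show ?thesis using s by (intro power_mono) auto
  qed
  also have "\<dots> = real (n+1)^N * M^N" by (simp add: power_mult_distrib)
  also have "M^N \<le> 1 + (\<Sum>l<n. x l ^ N)"
  proof -
    have "M \<in> insert 1 (x ` {..<n})" unfolding M_def by (intro Max_in) auto
    then consider "M = 1" | l where "l < n" "M = x l" by auto
    then show ?thesis
    proof cases
      case 1
      have "0 \<le> (\<Sum>l<n. x l ^ N)" using x by (intro sum_nonneg) auto
      then show ?thesis using 1 by simp
    next
      case 2
      have "x l ^ N \<le> (\<Sum>l<n. x l ^ N)" using 2 x by (intro member_le_sum) auto
      then show ?thesis using 2 by simp
    qed
  qed
  hence "real (n+1)^N * M^N \<le> real (n+1)^N * (1 + (\<Sum>l<n. x l ^ N))" by (intro mult_left_mono) auto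
  finally show ?thesis .
qed

lemma snorm_upper:
  assumes G: "schwartz n G" and x: "x \<in> Eucl n" and g: "set \<gamma> \<subseteq> {..<n}"
  shows "norm (complex_of_real (mon n \<alpha> x) * pds \<gamma> G x) \<le> snorm n \<alpha> \<gamma> G"
proof -
  have "bounded ((\<lambda>x. complex_of_real (mon n \<alpha> x) * pds \<gamma> G x) ` Eucl n)"
    using G g unfolding schwartz_def by blast
  then obtain B where B: "\<forall>z\<in>Eucl n. norm (complex_of_real (mon n \<alpha> z) * pds \<gamma> G z) \<le> B"
    unfolding bounded_iff by auto
  have "bdd_above ((\<lambda>z. norm (complex_of_real (mon n \<alpha> z) * pds \<gamma> G z)) ` Eucl n)"
    using B by (intro bdd_aboveI2) auto
  then show ?thesis unfolding snorm_def using x by (rule cSUP_upper2) auto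
qed

lemma zero_in_Eucl: "(\<lambda>_. 0) \<in> Eucl n" by (simp add: Eucl_def)

lemma snorm_nonneg:
  assumes G: "schwartz n G" and g: "set \<gamma> \<subseteq> {..<n}"
  shows "0 \<le> snorm n \<alpha> \<gamma> G"
  using snorm_upper[OF G zero_in_Eucl g] norm_ge_zero order_trans by blast

lemma mon_add: "mon N \<alpha> y * mon N e y = mon N (\<lambda>l. \<alpha> l + e l) y"
  by (simp add: mon_def prod.distrib[symmetric] power_add)

lemma mon_Suc: "mon (Suc n) E y = y 0 ^ E 0 * mon n (\<lambda>l. E (Suc l)) (tail y)"
  unfolding mon_def tail_def by (simp only: prod.lessThan_Suc_shift)

lemma abs_mon_sign_scale: assumes "\<bar>\<sigma>\<bar> = 1" shows "\<bar>mon n \<alpha> (\<lambda>l. \<sigma> * k l)\<bar> = \<bar>mon n \<alpha> k\<bar>"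
  using assms by (simp add: mon_def power_mult_distrib prod.distrib abs_mult abs_prod power_abs)

lemma mon_upd_pow:
  assumes "l < n"
  shows "mon n (E(l := E l + 2*N)) k = mon n E k * ((k l)^2)^N"
  using mon_remove(1)[OF assms, where t = "k l" and e = E and y = k]
    mon_remove(2)[OF assms, where p = "E l + 2*N" and e = E and y = k]
  by (simp add: power_add power_mult)

lemma abs_le_1_plus_sq: "\<bar>t::real\<bar> \<le> 1 + t^2"
proof (cases "\<bar>t\<bar> \<le> 1")
  case True then show ?thesis by (smt (verit) zero_le_power2)
next
  case False
  then have "\<bar>t\<bar> * 1 \<le> \<bar>t\<bar> * \<bar>t\<bar>" by (intro mult_left_mono) auto
  then show ?thesis by (simp add: power2_eq_square abs_mult_self_eq)
qed

lemma abs_time_pow_le: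
  assumes "\<bar>mink n y - a\<bar> < r"
  shows "\<bar>y 0\<bar>^N \<le> ((1 + \<bar>a\<bar> + r) * real (n+1))^N * (1 + (\<Sum>l<n. ((tail y l)^2)^N))"
proof -
  define K where "K = 1 + \<bar>a\<bar> + r"
  define s where "s = sqnorm n (tail y)"
  have K1: "K \<ge> 1" using assms by (simp add: K_def)
  have s0: "s \<ge> 0" unfolding s_def sqnorm_def by (intro sum_nonneg) auto
  have "(y 0)^2 \<le> \<bar>a\<bar> + r + s" using assms by (simp add: mink_def s_def)
  moreover have "1 * s \<le> K * s" by (rule mult_right_mono[OF K1 s0])
  ultimately have "\<bar>y 0\<bar> \<le> K * (1 + s)" using abs_le_1_plus_sq[of "y 0"]
    unfolding K_def by (simp add: algebra_simps)
  then have "\<bar>y 0\<bar>^N \<le> (K * (1 + s))^N" by (rule power_mono) simp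
  also have "\<dots> = K^N * (1 + s)^N" by (simp add: power_mult_distrib)
  also have "\<dots> \<le> K^N * (real (n+1)^N * (1 + (\<Sum>l<n. ((tail y l)^2)^N)))"
    unfolding s_def sqnorm_def using K1 by (intro mult_left_mono pow_sum_bound) auto
  finally show ?thesis by (simp add: K_def power_mult_distrib mult.assoc)
qed

lemma mon_weight_le_snorms:
  assumes G: "schwartz n G" and g: "set \<gamma> \<subseteq> {..<n}" and k: "k \<in> Eucl n" and \<sigma>: "\<bar>\<sigma>\<bar> = 1"
  shows "\<bar>mon n E k\<bar> * (1 + (\<Sum>l<n. ((k l)^2)^N)) * norm (pds \<gamma> G (\<lambda>l. \<sigma> * k l))
           \<le> snorm n E \<gamma> G + (\<Sum>l<n. snorm n (E(l := E l + 2*N)) \<gamma> G)"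
proof -
  define P where "P = norm (pds \<gamma> G (\<lambda>l. \<sigma> * k l))"
  have x: "(\<lambda>l. \<sigma> * k l) \<in> Eucl n" using k by (simp add: Eucl_def)
  have sn: "\<bar>mon n E' k\<bar> * P \<le> snorm n E' \<gamma> G" for E'
  proof -
    have "\<bar>mon n E' k\<bar> * P = norm (complex_of_real (mon n E' (\<lambda>l. \<sigma> * k l)) * pds \<gamma> G (\<lambda>l. \<sigma> * k l))"
      unfolding P_def using abs_mon_sign_scale[OF \<sigma>] by (simp add: norm_mult)
    also have "\<dots> \<le> snorm n E' \<gamma> G" by (rule snorm_upper[OF G x g])
    finally show ?thesis .
  qed
  have "\<bar>mon n E k\<bar> * (1 + (\<Sum>l<n. ((k l)^2)^N)) * P
      = \<bar>mon n E k\<bar> * P + (\<Sum>l<n. \<bar>mon n (E(l := E l + 2*N)) k\<bar> * P)"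
    by (simp add: mon_upd_pow abs_mult distrib_left distrib_right sum_distrib_left sum_distrib_right
        mult.assoc mult.left_commute)
  also have "\<dots> \<le> snorm n E \<gamma> G + (\<Sum>l<n. snorm n (E(l := E l + 2*N)) \<gamma> G)"
    by (intro add_mono sum_mono sn)
  finally show ?thesis unfolding P_def .
qed

text \<open>
  On the support of the cut-off, \<open>y\<^sub>0\<^sup>2\<close> is controlled by \<open>|k|\<^sup>2\<close>, so the time part of the
  weight is traded for extra powers of the spatial variables.
\<close>
lemma shell_term_bound:
  assumes G: "schwartz n G" and g: "set \<gamma> \<subseteq> {..<n}" and y: "y \<in> Eucl (Suc n)"
    and \<sigma>: "\<bar>\<sigma>\<bar> = 1" and r: "r > 0" and B: "\<forall>t. \<bar>bump_deriv r j t\<bar> \<le> Bj"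
  shows "norm (complex_of_real (mon (Suc n) \<alpha> y) * shell_term n r a \<sigma> G (e,j,\<gamma>) y)
     \<le> Bj * ((1 + \<bar>a\<bar> + r) * real (n+1))^(\<alpha> 0 + e 0) *
        (snorm n (\<lambda>l. \<alpha> (Suc l) + e (Suc l)) \<gamma> G +
         (\<Sum>l<n. snorm n ((\<lambda>l. \<alpha> (Suc l) + e (Suc l))(l := \<alpha> (Suc l) + e (Suc l) + 2*(\<alpha> 0 + e 0))) \<gamma> G))"
    (is "_ \<le> Bj * ?K^?N * ?S")
proof -
  define E where "E = (\<lambda>l. \<alpha> (Suc l) + e (Suc l))"
  define W where "W = 1 + (\<Sum>l<n. ((tail y l)^2)^?N)"
  define P where "P = norm (pds \<gamma> G (\<lambda>l. \<sigma> * tail y l))"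
  have Bj: "Bj \<ge> 0" using B order_trans abs_ge_zero by blast
  have K: "?K \<ge> 0" using r by simp
  have S: "?S \<ge> 0" using snorm_nonneg[OF G g] by (intro add_nonneg_nonneg sum_nonneg) auto
  have W0: "W \<ge> 0" unfolding W_def by (intro add_nonneg_nonneg sum_nonneg) auto
  have k: "tail y \<in> Eucl n" using y by (simp add: Eucl_def tail_def)
  have lhs: "norm (complex_of_real (mon (Suc n) \<alpha> y) * shell_term n r a \<sigma> G (e,j,\<gamma>) y)
      = \<bar>y 0\<bar>^?N * \<bar>mon n E (tail y)\<bar> * \<bar>bump_deriv r j (mink n y - a)\<bar> * P"
  proof -
    have "mon (Suc n) \<alpha> y * mon (Suc n) e y = y 0 ^ ?N * mon n E (tail y)"
      unfolding mon_add by (simp add: mon_Suc E_def)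
    then have "\<bar>mon (Suc n) \<alpha> y\<bar> * \<bar>mon (Suc n) e y\<bar> = \<bar>y 0\<bar>^?N * \<bar>mon n E (tail y)\<bar>"
      by (metis abs_mult power_abs)
    then show ?thesis using y
      by (simp add: shell_term_def norm_mult P_def abs_mult power_abs norm_power tail_def mult.assoc)
  qed
  show ?thesis
  proof (cases "\<bar>mink n y - a\<bar> < r")
    case False
    then have "bump_deriv r j (mink n y - a) = 0" using bump_deriv_eq_0[OF r] by simp
    then show ?thesis unfolding lhs using Bj S K by simp
  next
    case True
    have "\<bar>y 0\<bar>^?N * \<bar>mon n E (tail y)\<bar> * \<bar>bump_deriv r j (mink n y - a)\<bar> * P
        \<le> (?K^?N * W) * \<bar>mon n E (tail y)\<bar> * Bj * P"
      using abs_time_pow_le[OF True, of ?N, folded W_def] B Bj W0 r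
      by (intro mult_mono mult_nonneg_nonneg zero_le_power) (auto simp: P_def)
    also have "\<dots> = Bj * ?K^?N * (\<bar>mon n E (tail y)\<bar> * W * P)" by (simp add: algebra_simps)
    also have "\<dots> \<le> Bj * ?K^?N * ?S"
      using mon_weight_le_snorms[OF G g k \<sigma>, of E ?N] Bj K
      unfolding W_def P_def E_def by (intro mult_left_mono) auto
    finally show ?thesis unfolding lhs .
  qed
qed

lemma tnorm_upper:
  assumes F: "ts_space n F" and g: "set \<gamma> \<subseteq> {..<n}"
  shows "real m ^ p * snorm n \<alpha> \<gamma> (F m) \<le> tnorm n (p,\<alpha>,\<gamma>) F"
proof -
  have S: "summable (\<lambda>m. real m ^ p * snorm n \<alpha> \<gamma> (F m))" using F g unfolding ts_space_def by blast
  have nn: "0 \<le> real m ^ p * snorm n \<alpha> \<gamma> (F m)" for m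
    using snorm_nonneg[of n "F m" \<gamma> \<alpha>] F g unfolding ts_space_def by auto
  have "sum (\<lambda>m. real m ^ p * snorm n \<alpha> \<gamma> (F m)) {m} \<le> suminf (\<lambda>m. real m ^ p * snorm n \<alpha> \<gamma> (F m))"
    by (rule sum_le_suminf[OF S]) (auto simp: nn)
  then show ?thesis by (simp add: tnorm_def)
qed

lemma tnorm_nonneg:
  assumes F: "ts_space n F" and g: "set \<gamma> \<subseteq> {..<n}"
  shows "0 \<le> tnorm n (p,\<alpha>,\<gamma>) F"
  using tnorm_upper[OF F g, of 0 p \<alpha>] snorm_nonneg[of n "F 0" \<gamma> \<alpha>] F g
  unfolding ts_space_def by (smt (verit) mult_nonneg_nonneg zero_le_power of_nat_0_le_iff)

lemma Suc_pow_le: "(real m + 1)^p \<le> 2^p * (1 + real m ^ p)"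
proof (cases "m = 0")
  case True
  have "(1::real) \<le> 2^p" by (rule one_le_power) simp
  then show ?thesis using True by (cases p) auto
next
  case False
  then have "real m + 1 \<le> 2 * real m" by simp
  hence "(real m + 1)^p \<le> (2 * real m)^p" by (rule power_mono) simp
  also have "\<dots> = 2^p * real m ^ p" by (simp add: power_mult_distrib)
  also have "\<dots> \<le> 2^p * (1 + real m ^ p)" by simp
  finally show ?thesis .
qed

definition bump_deriv_bound :: "real \<Rightarrow> nat \<Rightarrow> real" where
  "bump_deriv_bound r j = (SOME B. B \<ge> 0 \<and> (\<forall>t. \<bar>bump_deriv r j t\<bar> \<le> B))"

lemma bump_deriv_bound: assumes "r > 0" shows "bump_deriv_bound r j \<ge> 0" "\<forall>t. \<bar>bump_deriv r j t\<bar> \<le> bump_deriv_bound r j"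
proof -
  have "\<exists>B. B \<ge> 0 \<and> (\<forall>t. \<bar>bump_deriv r j t\<bar> \<le> B)" using bump_deriv_bounded[OF assms] by blast
  from someI_ex[OF this] show "bump_deriv_bound r j \<ge> 0" "\<forall>t. \<bar>bump_deriv r j t\<bar> \<le> bump_deriv_bound r j"
    unfolding bump_deriv_bound_def by auto
qed

definition weight_exps :: "nat \<Rightarrow> (nat \<Rightarrow> nat) \<Rightarrow> (nat \<Rightarrow> nat) \<Rightarrow> (nat \<Rightarrow> nat) list" where
  "weight_exps n \<alpha> e = (\<lambda>l. \<alpha> (Suc l) + e (Suc l)) #
      map (\<lambda>l. (\<lambda>l. \<alpha> (Suc l) + e (Suc l))(l := \<alpha> (Suc l) + e (Suc l) + 2*(\<alpha> 0 + e 0))) [0..<n]"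

text \<open>
  The seminorm indices \<open>(c', \<alpha>', \<gamma>)\<close> of the sequence space that dominate one term: weights
  \<open>m\<^sup>0\<close> and \<open>m\<^sup>2\<^sup>N\<close>, spatial exponents from \<open>weight_exps\<close>.
\<close>
definition term_indices :: "nat \<Rightarrow> (nat \<Rightarrow> nat) \<Rightarrow> real \<times> term_data \<Rightarrow> (nat \<times> (nat \<Rightarrow> nat) \<times> nat list) list" where
  "term_indices n \<alpha> t = (case t of (c,(e,j,\<gamma>)) \<Rightarrow>
      concat (map (\<lambda>\<alpha>'. [(0,\<alpha>',\<gamma>),(2*(\<alpha> 0 + e 0),\<alpha>',\<gamma>)]) (weight_exps n \<alpha> e)))"

definition terms_indices :: "nat \<Rightarrow> (nat \<Rightarrow> nat) \<Rightarrow> (real \<times> term_data) list \<Rightarrow> (nat \<times> (nat \<Rightarrow> nat) \<times> nat list) set" where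
  "terms_indices n \<alpha> L = (\<Union>t\<in>set L. set (term_indices n \<alpha> t))"

definition terms_const :: "nat \<Rightarrow> real \<Rightarrow> real \<Rightarrow> (nat \<Rightarrow> nat) \<Rightarrow> (real \<times> term_data) list \<Rightarrow> real" where
  "terms_const n r A \<alpha> L = (\<Sum>(c,(e,j,\<gamma>))\<leftarrow>L. \<bar>c\<bar> * bump_deriv_bound r j * (4*((1+A+r)*real (n+1)))^(\<alpha> 0 + e 0)
        * real (length (term_indices n \<alpha> (c,(e,j,\<gamma>)))))"

lemma finite_terms_indices: "finite (terms_indices n \<alpha> L)" by (simp add: terms_indices_def)

lemma terms_indices_valid: "valid_terms n L \<Longrightarrow> \<forall>(c', \<alpha>', \<beta>') \<in> terms_indices n \<alpha> L. set \<beta>' \<subseteq> {..<n}"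
  unfolding terms_indices_def valid_terms_def term_indices_def by fastforce

lemma terms_const_nonneg: "r > 0 \<Longrightarrow> A \<ge> 0 \<Longrightarrow> terms_const n r A \<alpha> L \<ge> 0"
  unfolding terms_const_def by (intro sum_list_nonneg) (auto intro!: mult_nonneg_nonneg bump_deriv_bound)

lemma sum_list_le_len:
  assumes "\<forall>x\<in>set xs. f x \<le> (T::real)"
  shows "sum_list (map f xs) \<le> real (length xs) * T"
  using assms by (induction xs) (auto simp: algebra_simps)

lemma sum_list_concat_map: "sum_list (map f (concat (map g xs))) = sum_list (map (\<lambda>x. sum_list (map f (g x))) xs)"
  by (induction xs) auto

lemma sum_weight_exps:
  "snorm n (\<lambda>l. \<alpha> (Suc l) + e (Suc l)) \<gamma> G +
   (\<Sum>l<n. snorm n ((\<lambda>l. \<alpha> (Suc l) + e (Suc l))(l := \<alpha> (Suc l) + e (Suc l) + 2*(\<alpha> 0 + e 0))) \<gamma> G)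
   = sum_list (map (\<lambda>\<alpha>'. snorm n \<alpha>' \<gamma> G) (weight_exps n \<alpha> e))"
proof -
  have "(\<Sum>l<n. snorm n ((\<lambda>l. \<alpha> (Suc l) + e (Suc l))(l := \<alpha> (Suc l) + e (Suc l) + 2*(\<alpha> 0 + e 0))) \<gamma> G)
      = sum_list (map (\<lambda>l. snorm n ((\<lambda>l. \<alpha> (Suc l) + e (Suc l))(l := \<alpha> (Suc l) + e (Suc l) + 2*(\<alpha> 0 + e 0))) \<gamma> G) [0..<n])"
    by (simp add: sum_set_upt_conv_sum_list_nat[symmetric] lessThan_atLeast0)
  then show ?thesis by (simp add: weight_exps_def o_def)
qed

lemma shell_const_pow_le:
  assumes r: "r > 0" and A: "A \<ge> 0" and a: "\<bar>a\<bar> \<le> A * (real m + 1)^2"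
  shows "((1 + \<bar>a\<bar> + r) * real (n+1))^N \<le> (4*((1+A+r)*real (n+1)))^N * (1 + real m ^ (2*N))"
proof -
  define W where "W = (1+A+r)*real (n+1)"
  have m1: "(real m + 1)^2 \<ge> 1" by simp
  have "1 + \<bar>a\<bar> + r \<le> 1 + A * (real m + 1)^2 + r" using a by simp
  also have "\<dots> \<le> (1+A+r) * (real m + 1)^2"
    using m1 r mult_left_mono[OF m1, of r] unfolding distrib_right by linarith
  finally have "(1 + \<bar>a\<bar> + r) * real (n+1) \<le> (1+A+r) * (real m + 1)^2 * real (n+1)"
    by (rule mult_right_mono) simp
  also have "\<dots> = W * (real m + 1)^2" by (simp add: W_def mult_ac)
  finally have "(1 + \<bar>a\<bar> + r) * real (n+1) \<le> W * (real m + 1)^2" .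
  then have "((1 + \<bar>a\<bar> + r) * real (n+1))^N \<le> (W * (real m + 1)^2)^N"
    using r by (intro power_mono) auto
  also have "\<dots> = W^N * (real m + 1)^(2*N)" by (simp add: power_mult_distrib power_mult)
  also have "\<dots> \<le> W^N * (2^(2*N) * (1 + real m ^ (2*N)))"
    using A r by (intro mult_left_mono Suc_pow_le) (auto simp: W_def)
  also have "\<dots> = (4*W)^N * (1 + real m ^ (2*N))" by (simp add: power_mult power_mult_distrib)
  finally show ?thesis unfolding W_def .
qed

lemma weighted_snorms_le_tnorms:
  assumes F: "ts_space n F" and g: "set \<gamma> \<subseteq> {..<n}"
  shows "(1 + real m ^ (2*(\<alpha> 0 + e 0))) * sum_list (map (\<lambda>\<alpha>'. snorm n \<alpha>' \<gamma> (F m)) (weight_exps n \<alpha> e))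
           \<le> sum_list (map (\<lambda>i. tnorm n i F) (term_indices n \<alpha> (c,(e,j,\<gamma>))))"
proof -
  let ?N = "2*(\<alpha> 0 + e 0)"
  have "(1 + real m ^ ?N) * sum_list (map (\<lambda>\<alpha>'. snorm n \<alpha>' \<gamma> (F m)) (weight_exps n \<alpha> e))
      = sum_list (map (\<lambda>\<alpha>'. real m ^ 0 * snorm n \<alpha>' \<gamma> (F m) + real m ^ ?N * snorm n \<alpha>' \<gamma> (F m))
                      (weight_exps n \<alpha> e))"
    by (simp add: sum_list_const_mult[symmetric] distrib_right sum_list_addf)
  also have "\<dots> \<le> sum_list (map (\<lambda>\<alpha>'. tnorm n (0,\<alpha>',\<gamma>) F + tnorm n (?N,\<alpha>',\<gamma>) F) (weight_exps n \<alpha> e))"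
    by (intro sum_list_mono add_mono tnorm_upper[OF F g])
  also have "\<dots> = sum_list (map (\<lambda>i. tnorm n i F) (term_indices n \<alpha> (c,(e,j,\<gamma>))))"
    by (simp add: term_indices_def sum_list_concat_map)
  finally show ?thesis .
qed

text \<open>
  The factor \<open>(m+1)\<^sup>2\<close> coming from the shell \<open>a\<close> is absorbed by the weight \<open>m\<^sup>2\<^sup>N\<close> of the
  sequence seminorms.
\<close>
lemma term_bound:
  assumes r: "r > 0" and A: "A \<ge> 0" and g: "set \<gamma> \<subseteq> {..<n}" and \<sigma>: "\<bar>\<sigma>\<bar> = 1"
    and F: "ts_space n F" and y: "y \<in> Eucl (Suc n)" and a: "\<bar>a\<bar> \<le> A * (real m + 1)^2"
    and T: "\<forall>i\<in>set (term_indices n \<alpha> (c,(e,j,\<gamma>))). tnorm n i F \<le> T"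
  shows "\<bar>c\<bar> * norm (complex_of_real (mon (Suc n) \<alpha> y) * shell_term n r a \<sigma> (F m) (e,j,\<gamma>) y)
     \<le> \<bar>c\<bar> * bump_deriv_bound r j * (4*((1+A+r)*real (n+1)))^(\<alpha> 0 + e 0)
          * real (length (term_indices n \<alpha> (c,(e,j,\<gamma>)))) * T"
proof -
  let ?N = "\<alpha> 0 + e 0" and ?B = "bump_deriv_bound r j" and ?W = "(4*((1+A+r)*real (n+1)))"
  define S where "S = sum_list (map (\<lambda>\<alpha>'. snorm n \<alpha>' \<gamma> (F m)) (weight_exps n \<alpha> e))"
  have G: "schwartz n (F m)" using F by (simp add: ts_space_def)
  have S0: "S \<ge> 0" unfolding S_def using snorm_nonneg[OF G g] by (intro sum_list_nonneg) auto
  have B: "?B \<ge> 0" by (rule bump_deriv_bound(1)[OF r])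
  have "norm (complex_of_real (mon (Suc n) \<alpha> y) * shell_term n r a \<sigma> (F m) (e,j,\<gamma>) y)
      \<le> ?B * ((1 + \<bar>a\<bar> + r) * real (n+1))^?N * S"
    using shell_term_bound[OF G g y \<sigma> r bump_deriv_bound(2)[OF r], of \<alpha> a e]
    unfolding sum_weight_exps S_def .
  also have "\<dots> \<le> ?B * (?W^?N * (1 + real m ^ (2*?N))) * S"
    by (intro mult_right_mono mult_left_mono shell_const_pow_le[OF r A a] B S0)
  also have "\<dots> = ?B * ?W^?N * ((1 + real m ^ (2*?N)) * S)" by (simp add: algebra_simps)
  also have "\<dots> \<le> ?B * ?W^?N * sum_list (map (\<lambda>i. tnorm n i F) (term_indices n \<alpha> (c,(e,j,\<gamma>))))"
    using weighted_snorms_le_tnorms[OF F g] B A r unfolding S_def by (intro mult_left_mono) auto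
  also have "\<dots> \<le> ?B * ?W^?N * (real (length (term_indices n \<alpha> (c,(e,j,\<gamma>)))) * T)"
    using sum_list_le_len[of _ _ T] T B A r by (intro mult_left_mono) auto
  finally have "norm (complex_of_real (mon (Suc n) \<alpha> y) * shell_term n r a \<sigma> (F m) (e,j,\<gamma>) y)
      \<le> ?B * ?W^?N * (real (length (term_indices n \<alpha> (c,(e,j,\<gamma>)))) * T)" .
  from mult_left_mono[OF this abs_ge_zero[of c]] show ?thesis by (simp only: mult.assoc)
qed

lemma norm_eval_terms_le:
  "norm (complex_of_real M * eval_terms n r a \<sigma> G L y)
     \<le> sum_list (map (\<lambda>(c,t). \<bar>c\<bar> * norm (complex_of_real M * shell_term n r a \<sigma> G t y)) L)"
proof (induction L)
  case Nil then show ?case by (simp add: eval_terms_def)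
next
  case (Cons p L)
  obtain c t where p: "p = (c,t)" by (cases p) auto
  have "complex_of_real M * eval_terms n r a \<sigma> G (p#L) y
      = complex_of_real c * (complex_of_real M * shell_term n r a \<sigma> G t y) + complex_of_real M * eval_terms n r a \<sigma> G L y"
    using p by (simp add: eval_terms_def algebra_simps)
  hence "norm (complex_of_real M * eval_terms n r a \<sigma> G (p#L) y)
      \<le> \<bar>c\<bar> * norm (complex_of_real M * shell_term n r a \<sigma> G t y) + norm (complex_of_real M * eval_terms n r a \<sigma> G L y)"
    by (simp add: norm_triangle_ineq order_trans[OF norm_triangle_ineq] norm_mult)
  then show ?case using Cons p by simp
qed

lemma eval_terms_bound:
  assumes r: "r > 0" and A: "A \<ge> 0" and v: "valid_terms n L" and \<sigma>: "\<bar>\<sigma>\<bar> = 1"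
    and F: "ts_space n F" and y: "y \<in> Eucl (Suc n)" and a: "\<bar>a\<bar> \<le> A * (real m + 1)^2"
  shows "norm (complex_of_real (mon (Suc n) \<alpha> y) * eval_terms n r a \<sigma> (F m) L y)
           \<le> terms_const n r A \<alpha> L * (\<Sum>i\<in>terms_indices n \<alpha> L. tnorm n i F)"
proof -
  define T where "T = (\<Sum>i\<in>terms_indices n \<alpha> L. tnorm n i F)"
  have Ti: "tnorm n i F \<le> T" if "i \<in> terms_indices n \<alpha> L" for i
  proof -
    have nn: "\<forall>j\<in>terms_indices n \<alpha> L. 0 \<le> tnorm n j F"
      using terms_indices_valid[OF v] tnorm_nonneg[OF F] by fast
    show ?thesis unfolding T_def using nn finite_terms_indices by (intro member_le_sum[OF that]) auto
  qed
  have "norm (complex_of_real (mon (Suc n) \<alpha> y) * eval_terms n r a \<sigma> (F m) L y)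
      \<le> sum_list (map (\<lambda>(c,t). \<bar>c\<bar> * norm (complex_of_real (mon (Suc n) \<alpha> y) * shell_term n r a \<sigma> (F m) t y)) L)"
    by (rule norm_eval_terms_le)
  also have "\<dots> \<le> sum_list (map (\<lambda>(c,(e,j,\<gamma>)). \<bar>c\<bar> * bump_deriv_bound r j * (4*((1+A+r)*real (n+1)))^(\<alpha> 0 + e 0)
        * real (length (term_indices n \<alpha> (c,(e,j,\<gamma>)))) * T) L)"
  proof (rule sum_list_mono)
    fix p assume p: "p \<in> set L"
    obtain c e j \<gamma> where pp: "p = (c,(e,j,\<gamma>))" by (cases p) auto
    have g: "set \<gamma> \<subseteq> {..<n}" using v p pp unfolding valid_terms_def by fastforce
    have T': "\<forall>i\<in>set (term_indices n \<alpha> (c,(e,j,\<gamma>))). tnorm n i F \<le> T"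
      using Ti p pp unfolding terms_indices_def by blast
    show "(case p of (c,t) \<Rightarrow> \<bar>c\<bar> * norm (complex_of_real (mon (Suc n) \<alpha> y) * shell_term n r a \<sigma> (F m) t y))
       \<le> (case p of (c,(e,j,\<gamma>)) \<Rightarrow> \<bar>c\<bar> * bump_deriv_bound r j * (4*((1+A+r)*real (n+1)))^(\<alpha> 0 + e 0)
        * real (length (term_indices n \<alpha> (c,(e,j,\<gamma>)))) * T)"
      unfolding pp using term_bound[OF r A g \<sigma> F y a T'] by simp
  qed
  also have "\<dots> = terms_const n r A \<alpha> L * T"
    unfolding terms_const_def sum_list_mult_const[symmetric] by (rule arg_cong[where f=sum_list]) (auto intro!: map_cong)
  finally show ?thesis unfolding T_def .
qed

section \<open>Locality of partial derivatives\<close>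

definition near :: "nat \<Rightarrow> (nat \<Rightarrow> real) \<Rightarrow> real \<Rightarrow> (nat \<Rightarrow> real) \<Rightarrow> bool" where
  "near N y e z \<longleftrightarrow> z \<in> Eucl N \<and> (\<forall>i<N. \<bar>z i - y i\<bar> < e)"

lemma near_upd:
  assumes "near N y e z" "i < N" "\<bar>t - z i\<bar> < e - \<bar>z i - y i\<bar>"
  shows "near N y e (z(i := t))"
  using assms unfolding near_def by (auto simp: Eucl_upd)

lemma eventually_abs_less: "e > 0 \<Longrightarrow> eventually (\<lambda>t. \<bar>t - x\<bar> < e) (nhds (x::real))"
  unfolding eventually_nhds by (intro exI[of _ "ball x e"]) (auto simp: dist_real_def abs_minus_commute)

lemma pds_local:
  assumes fg: "\<forall>z. near N y e z \<longrightarrow> f z = g z" and b: "set \<beta> \<subseteq> {..<N}"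
  shows "near N y e z \<Longrightarrow> pds \<beta> f z = pds \<beta> g z"
  using b
proof (induction \<beta> arbitrary: z)
  case Nil then show ?case using fg by simp
next
  case (Cons i js)
  have i: "i < N" and js: "set js \<subseteq> {..<N}" using Cons.prems by auto
  have pos: "e - \<bar>z i - y i\<bar> > 0" using Cons.prems(1) i unfolding near_def by auto
  have IH': "pds js f (z(i:=t)) = pds js g (z(i:=t))" if "\<bar>t - z i\<bar> < e - \<bar>z i - y i\<bar>" for t
    using Cons.IH[OF near_upd[OF Cons.prems(1) i that] js] .
  have "eventually (\<lambda>t. t \<in> UNIV \<longrightarrow> pds js f (z(i:=t)) = pds js g (z(i:=t))) (nhds (z i))"
    using eventually_abs_less[OF pos] by eventually_elim (use IH' in blast)
  then have "vector_derivative (\<lambda>t. pds js f (z(i:=t))) (at (z i)) = vector_derivative (\<lambda>t. pds js g (z(i:=t))) (at (z i))"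
    by (rule vector_derivative_cong_eq) auto
  then show ?case by (simp add: pd_def)
qed

lemma pds_local_diff:
  assumes fg: "\<forall>z. near N y e z \<longrightarrow> f z = g z" and b: "set \<beta> \<subseteq> {..<N}" and y: "y \<in> Eucl N"
    and e: "e > 0" and i: "i < N"
    and d: "(\<lambda>t. pds \<beta> g (y(i := t))) differentiable (at (y i))"
  shows "(\<lambda>t. pds \<beta> f (y(i := t))) differentiable (at (y i))"
proof (rule differentiable_transform_within[OF d e])
  fix t assume "t \<in> UNIV" "dist t (y i) < e"
  then have "near N y e (y(i := t))" using y i by (intro near_upd) (auto simp: near_def dist_real_def)
  then show "pds \<beta> g (y(i := t)) = pds \<beta> f (y(i := t))" using pds_local[OF fg b] by simp
qed simp

lemma pds_zero: "pds \<beta> (\<lambda>_. 0) = (\<lambda>_. 0)"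
  by (induction \<beta>) (auto simp: pd_def fun_eq_iff)

lemma mink_close:
  assumes e1: "e \<le> 1" and c: "\<forall>i<Suc n. \<bar>z i - y i\<bar> < e"
  shows "\<bar>mink n z - mink n y\<bar> \<le> e * (\<Sum>i<Suc n. 2 * \<bar>y i\<bar> + 1)"
proof -
  have sq: "\<bar>(z i)^2 - (y i)^2\<bar> \<le> e * (2 * \<bar>y i\<bar> + 1)" if "i < Suc n" for i
  proof -
    have d: "\<bar>z i - y i\<bar> \<le> e" using c that by force
    have s: "\<bar>z i + y i\<bar> \<le> 2 * \<bar>y i\<bar> + 1" using d e1 by linarith
    have e0: "0 \<le> e" using d abs_ge_zero order_trans by blast
    have "(z i)^2 - (y i)^2 = (z i - y i) * (z i + y i)" by (simp add: power2_eq_square algebra_simps)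
    hence "\<bar>(z i)^2 - (y i)^2\<bar> = \<bar>z i - y i\<bar> * \<bar>z i + y i\<bar>" by (simp add: abs_mult)
    also have "\<dots> \<le> e * (2 * \<bar>y i\<bar> + 1)" by (rule mult_mono[OF d s]) (auto simp: e0)
    finally show ?thesis .
  qed
  have "mink n z - mink n y = ((z 0)^2 - (y 0)^2) - (\<Sum>l<n. (z (Suc l))^2 - (y (Suc l))^2)"
    by (simp add: mink_def sqnorm_def tail_def sum_subtractf)
  hence "\<bar>mink n z - mink n y\<bar> \<le> \<bar>(z 0)^2 - (y 0)^2\<bar> + (\<Sum>l<n. \<bar>(z (Suc l))^2 - (y (Suc l))^2\<bar>)"
  proof -
    have "\<bar>\<Sum>l<n. (z (Suc l))^2 - (y (Suc l))^2\<bar> \<le> (\<Sum>l<n. \<bar>(z (Suc l))^2 - (y (Suc l))^2\<bar>)" by (rule sum_abs)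
    then show ?thesis using abs_triangle_ineq4[of "(z 0)^2 - (y 0)^2" "\<Sum>l<n. (z (Suc l))^2 - (y (Suc l))^2"]
      by (simp only: \<open>mink n z - mink n y = _\<close>)
  qed
  also have "\<dots> \<le> e * (2 * \<bar>y 0\<bar> + 1) + (\<Sum>l<n. e * (2 * \<bar>y (Suc l)\<bar> + 1))"
    using sq by (intro add_mono sum_mono) auto
  also have "\<dots> = e * (\<Sum>i<Suc n. 2 * \<bar>y i\<bar> + 1)"
    by (simp only: sum.lessThan_Suc_shift sum_distrib_left distrib_left)
  finally show ?thesis .
qed

section \<open>Extension from separated mass shells\<close>

lemma pt_Eucl: "k \<in> Eucl n \<Longrightarrow> pt t k \<in> Eucl (Suc n)"
  by (auto simp: Eucl_def pt_def split: nat.splits)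

lemma tail_pt: "tail (pt t k) = k" by (simp add: tail_def pt_def)

lemma pt0: "pt t k 0 = t" by (simp add: pt_def)
lemma ptS: "pt t k (Suc l) = k l" by (simp add: pt_def)

lemma sqnorm_neg: "sqnorm n (\<lambda>i. - k i) = sqnorm n k" by (simp add: sqnorm_def)

definition base_terms :: "(real \<times> term_data) list" where
  "base_terms = [(1, (\<lambda>_. 0, 0, []))]"

lemma valid_base_terms: "valid_terms n base_terms"
  by (simp add: valid_terms_def base_terms_def)

lemma eval_base_terms:
  "eval_terms n r a \<sigma> G base_terms y =
     (if y \<in> Eucl (Suc n) then complex_of_real (bump r (mink n y - a)) * G (\<lambda>l. \<sigma> * y (Suc l)) else 0)"
  by (simp add: eval_terms_def base_terms_def shell_term_def mon_def bump_deriv_def)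

lemma tnorm_nonneg_on:
  "ts_space n F \<Longrightarrow> \<forall>(c', \<alpha>', \<beta>') \<in> I. set \<beta>' \<subseteq> {..<n} \<Longrightarrow> i \<in> I \<Longrightarrow> 0 \<le> tnorm n i F"
  by (cases i) (auto intro: tnorm_nonneg)

lemma near_self: "y \<in> Eucl N \<Longrightarrow> e > 0 \<Longrightarrow> near N y e y"
  by (simp add: near_def)

lemma near_mono: "near N y e z \<Longrightarrow> e \<le> e' \<Longrightarrow> near N y e' z"
  by (auto simp: near_def)

lemma mink_continuous_near:
  assumes g: "g > 0"
  obtains e where "e > 0" "\<And>z. near (Suc n) y e z \<Longrightarrow> \<bar>mink n z - mink n y\<bar> < g"
proof
  define W where "W = (\<Sum>i<Suc n. 2 * \<bar>y i\<bar> + 1)"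
  have W0: "W \<ge> 0" unfolding W_def by (intro sum_nonneg) auto
  show "min 1 (g/(W+1)) > 0" using g W0 by simp
  fix z assume z: "near (Suc n) y (min 1 (g/(W+1))) z"
  have "\<bar>mink n z - mink n y\<bar> \<le> min 1 (g/(W+1)) * W"
    using mink_close[of "min 1 (g/(W+1))" n z y] z unfolding near_def W_def by auto
  also have "\<dots> \<le> g/(W+1) * W" using W0 by (intro mult_right_mono) auto
  also have "\<dots> < g" using W0 g by (simp add: field_simps)
  finally show "\<bar>mink n z - mink n y\<bar> < g" .
qed

text \<open>
  The mass shells are the hyperboloids \<open>mink y = a m\<close>; the bound \<open>\<delta> \<le> a m\<close> keeps their
  \<open>\<delta>\<close>-neighbourhoods away from the light cone, so that \<open>y\<^sub>0 \<noteq> 0\<close> there.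
\<close>
locale separated_shells =
  fixes a :: "nat \<Rightarrow> real" and \<delta> A :: real
  assumes delta_pos: "\<delta> > 0"
    and shell_ge: "\<And>m. \<delta> \<le> a m"
    and shells_separated: "\<And>m m'. m \<noteq> m' \<Longrightarrow> 2 * \<delta> \<le> \<bar>a m - a m'\<bar>"
    and shell_le: "\<And>m. \<bar>a m\<bar> \<le> A * (real m + 1)^2"
begin

lemma shell_unique: "\<bar>x - a m\<bar> < \<delta> \<Longrightarrow> \<bar>x - a m'\<bar> < \<delta> \<Longrightarrow> m = m'"
  using shells_separated[of m m'] by (cases "m = m'") linarith+

lemma shell_THE: "\<bar>x - a m\<bar> < \<delta> \<Longrightarrow> (THE m. \<bar>x - a m\<bar> < \<delta>) = m"
  using shell_unique by blast

lemma A_nonneg: "A \<ge> 0"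
  using shell_le[of 0] by simp

lemma time_coord_nonzero: "\<bar>mink n y - a m\<bar> < \<delta> \<Longrightarrow> y 0 \<noteq> 0"
  using shell_ge[of m] sum_nonneg[of "{..<n}" "\<lambda>i. (tail y i)^2"]
  by (auto simp: mink_def sqnorm_def)

definition shell_ext ::
  "nat \<Rightarrow> (nat \<Rightarrow> (nat \<Rightarrow> real) \<Rightarrow> complex) \<Rightarrow> (nat \<Rightarrow> (nat \<Rightarrow> real) \<Rightarrow> complex) \<Rightarrow> (nat \<Rightarrow> real) \<Rightarrow> complex"
where
  "shell_ext n Fp Fm y =
     (if y \<in> Eucl (Suc n) \<and> (\<exists>m. \<bar>mink n y - a m\<bar> < \<delta>) then
        (let m = THE m. \<bar>mink n y - a m\<bar> < \<delta> in
          complex_of_real (bump (\<delta>/2) (mink n y - a m)) *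
          (if y 0 > 0 then Fp m (tail y) else Fm m (\<lambda>l. - y (Suc l))))
      else 0)"

lemma shell_ext_near_shell:
  assumes "z \<in> Eucl (Suc n)" "\<bar>mink n z - a m\<bar> < \<delta>"
  shows "shell_ext n Fp Fm z = complex_of_real (bump (\<delta>/2) (mink n z - a m)) *
           (if z 0 > 0 then Fp m (tail z) else Fm m (\<lambda>l. - z (Suc l)))"
  using assms shell_THE[OF assms(2)] unfolding shell_ext_def Let_def by auto

lemma shell_ext_linear:
  "shell_ext n (\<lambda>m k. u * Fp m k + v * Gp m k) (\<lambda>m k. u * Fm m k + v * Gm m k)
     = (\<lambda>y. u * shell_ext n Fp Fm y + v * shell_ext n Gp Gm y)"
proof
  fix y
  show "shell_ext n (\<lambda>m k. u * Fp m k + v * Gp m k) (\<lambda>m k. u * Fm m k + v * Gm m k) y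
          = u * shell_ext n Fp Fm y + v * shell_ext n Gp Gm y"
  proof (cases "y \<in> Eucl (Suc n) \<and> (\<exists>m. \<bar>mink n y - a m\<bar> < \<delta>)")
    case True
    then show ?thesis by (simp add: shell_ext_def Let_def algebra_simps)
  next
    case False
    then show ?thesis unfolding shell_ext_def if_not_P[OF False] by simp
  qed
qed

lemma shell_ext_on_shell:
  assumes k: "k \<in> Eucl n"
  shows "shell_ext n Fp Fm (pt (sqrt (sqnorm n k + a m)) k) = Fp m k"
    and "shell_ext n Fp Fm (pt (- sqrt (sqnorm n k + a m)) (\<lambda>i. - k i)) = Fm m k"
proof -
  have sq: "sqnorm n k \<ge> 0" unfolding sqnorm_def by (intro sum_nonneg) auto
  have w: "sqrt (sqnorm n k + a m) > 0" "(sqrt (sqnorm n k + a m))^2 = sqnorm n k + a m"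
    using sq shell_ge[of m] delta_pos by auto
  have kn: "(\<lambda>i. - k i) \<in> Eucl n" using k by (simp add: Eucl_def)
  have bump0: "bump (\<delta>/2) 0 = 1"
    using bump_at_0[of "\<delta>/2"] delta_pos by simp
  show "shell_ext n Fp Fm (pt (sqrt (sqnorm n k + a m)) k) = Fp m k"
    using w delta_pos bump0
    by (subst shell_ext_near_shell[of _ _ m]) (auto simp: pt_Eucl[OF k] mink_def tail_pt pt0)
  show "shell_ext n Fp Fm (pt (- sqrt (sqnorm n k + a m)) (\<lambda>i. - k i)) = Fm m k"
    using w delta_pos bump0
    by (subst shell_ext_near_shell[of _ _ m])
       (auto simp: pt_Eucl[OF kn] mink_def tail_pt pt0 ptS sqnorm_neg)
qed

text \<open>
  Every point has a neighbourhood on which the extension is either zero or a single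
  term \<open>bump (mink - a m) \<cdot> F\<^sub>m(\<sigma> k)\<close>: the cut-off vanishes at distance \<open>\<delta>/2\<close> from the shell,
  while the selection of \<open>m\<close> and of the sign of \<open>y\<^sub>0\<close> only changes at distance \<open>\<delta>\<close>.
\<close>
lemma shell_ext_locally:
  assumes y: "y \<in> Eucl (Suc n)"
  obtains (zero) e where "e > 0" "\<And>z. near (Suc n) y e z \<Longrightarrow> shell_ext n Fp Fm z = 0"
  | (shell) e m \<sigma> F where "e > 0" "(\<sigma>, F) \<in> {(1, Fp), (-1, Fm)}"
      "\<And>z. near (Suc n) y e z \<Longrightarrow> shell_ext n Fp Fm z = eval_terms n (\<delta>/2) (a m) \<sigma> (F m) base_terms z"
proof (cases "\<exists>m. \<bar>mink n y - a m\<bar> < \<delta>")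
  case True
  then obtain m where m: "\<bar>mink n y - a m\<bar> < \<delta>" by blast
  have y0: "y 0 \<noteq> 0" by (rule time_coord_nonzero[OF m])
  obtain e1 where e1: "e1 > 0" "\<And>z. near (Suc n) y e1 z \<Longrightarrow> \<bar>mink n z - mink n y\<bar> < \<delta> - \<bar>mink n y - a m\<bar>"
    using mink_continuous_near[of "\<delta> - \<bar>mink n y - a m\<bar>" n y] m by auto
  define e where "e = min e1 (\<bar>y 0\<bar>/2)"
  have e: "e > 0" using e1 y0 by (simp add: e_def)
  have z: "z \<in> Eucl (Suc n)" "\<bar>mink n z - a m\<bar> < \<delta>" "z 0 > 0 \<longleftrightarrow> y 0 > 0"
    if "near (Suc n) y e z" for z
  proof -
    have "\<bar>mink n z - mink n y\<bar> < \<delta> - \<bar>mink n y - a m\<bar>"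
      using e1(2) near_mono[OF that] by (simp add: e_def)
    moreover have "\<bar>z 0 - y 0\<bar> < \<bar>y 0\<bar>/2" using that unfolding near_def e_def by auto
    ultimately show "\<bar>mink n z - a m\<bar> < \<delta>" "z 0 > 0 \<longleftrightarrow> y 0 > 0" by linarith+
    show "z \<in> Eucl (Suc n)" using that by (simp add: near_def)
  qed
  have "shell_ext n Fp Fm z = eval_terms n (\<delta>/2) (a m) \<sigma> (F m) base_terms z"
    if "(\<sigma>, F) = (if y 0 > 0 then (1, Fp) else (-1, Fm))" "near (Suc n) y e z" for \<sigma> F z
    using z[OF that(2)] that(1)
    by (cases "y 0 > 0") (simp_all add: shell_ext_near_shell eval_base_terms tail_def)
  then show ?thesis
    by (cases "y 0 > 0") (simp_all add: shell[OF e, of 1 Fp m] shell[OF e, of "-1" Fm m])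
next
  case False
  obtain e where e: "e > 0" "\<And>z. near (Suc n) y e z \<Longrightarrow> \<bar>mink n z - mink n y\<bar> < \<delta>/2"
    using mink_continuous_near[of "\<delta>/2" n y] delta_pos by auto
  have "shell_ext n Fp Fm z = 0" if z: "near (Suc n) y e z" for z
  proof (cases "\<exists>m. \<bar>mink n z - a m\<bar> < \<delta>")
    case True
    then obtain m where m: "\<bar>mink n z - a m\<bar> < \<delta>" by blast
    have "\<not> \<bar>mink n y - a m\<bar> < \<delta>" using False by blast
    with e(2)[OF z] have "\<bar>mink n z - a m\<bar> \<ge> \<delta>/2" by linarith
    then have "bump (\<delta>/2) (mink n z - a m) = 0"
      using bump_deriv_eq_0[of "\<delta>/2" "mink n z - a m" 0] delta_pos by (simp add: bump_deriv_def)
    then show ?thesis using z m by (simp add: shell_ext_near_shell near_def)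
  next
    case False
    then show ?thesis unfolding shell_ext_def by auto
  qed
  then show ?thesis using zero[OF e(1)] by blast
qed

lemma shell_ext_pds_differentiable:
  assumes Fp: "ts_space n Fp" and Fm: "ts_space n Fm" and b: "set \<beta> \<subseteq> {..<Suc n}"
    and y: "y \<in> Eucl (Suc n)" and i: "i < Suc n"
  shows "(\<lambda>t. pds \<beta> (shell_ext n Fp Fm) (y(i := t))) differentiable (at (y i))"
  using y
proof (cases rule: shell_ext_locally[of y n Fp Fm])
  case (zero e)
  have "(\<lambda>t. pds \<beta> (\<lambda>_. 0) (y(i := t))) differentiable (at (y i))"
    by (simp add: pds_zero)
  from pds_local_diff[OF _ b y zero(1) i this] show ?thesis by (simp add: zero(2))
next
  case (shell e m \<sigma> F)
  have "ts_space n F" using shell(2) Fp Fm by auto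
  then have "schwartz n (F m)" by (simp add: ts_space_def)
  have d: "(\<lambda>t. pds \<beta> (eval_terms n (\<delta>/2) (a m) \<sigma> (F m) base_terms) (y(i := t))) differentiable (at (y i))"
    by (rule pds_eval_terms_differentiable[OF \<open>schwartz n (F m)\<close> b valid_base_terms i])
  from pds_local_diff[OF _ b y shell(1) i d] show ?thesis by (simp add: shell(3))
qed

definition ext_const :: "nat \<Rightarrow> (nat \<Rightarrow> nat) \<Rightarrow> nat list \<Rightarrow> real" where
  "ext_const n \<alpha> \<beta> = terms_const n (\<delta>/2) A \<alpha> (iter_diff_terms 1 \<beta> base_terms)
                     + terms_const n (\<delta>/2) A \<alpha> (iter_diff_terms (-1) \<beta> base_terms)"

definition ext_indices :: "nat \<Rightarrow> (nat \<Rightarrow> nat) \<Rightarrow> nat list \<Rightarrow> (nat \<times> (nat \<Rightarrow> nat) \<times> nat list) set" where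
  "ext_indices n \<alpha> \<beta> = terms_indices n \<alpha> (iter_diff_terms 1 \<beta> base_terms)
                       \<union> terms_indices n \<alpha> (iter_diff_terms (-1) \<beta> base_terms)"

lemma ext_indices_valid:
  assumes "set \<beta> \<subseteq> {..<Suc n}"
  shows "finite (ext_indices n \<alpha> \<beta>)" "\<forall>(c', \<alpha>', \<beta>') \<in> ext_indices n \<alpha> \<beta>. set \<beta>' \<subseteq> {..<n}"
proof -
  have "valid_terms n (iter_diff_terms \<sigma> \<beta> base_terms)" for \<sigma>
    by (rule valid_iter_diff_terms[OF valid_base_terms assms])
  then show "\<forall>(c', \<alpha>', \<beta>') \<in> ext_indices n \<alpha> \<beta>. set \<beta>' \<subseteq> {..<n}"
    unfolding ext_indices_def ball_Un using terms_indices_valid by blast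
qed (simp add: ext_indices_def finite_terms_indices)

lemma ext_const_nonneg: "ext_const n \<alpha> \<beta> \<ge> 0"
  unfolding ext_const_def using delta_pos A_nonneg by (intro add_nonneg_nonneg terms_const_nonneg) auto

lemma shell_ext_bound:
  assumes Fp: "ts_space n Fp" and Fm: "ts_space n Fm" and b: "set \<beta> \<subseteq> {..<Suc n}"
    and y: "y \<in> Eucl (Suc n)"
  shows "norm (complex_of_real (mon (Suc n) \<alpha> y) * pds \<beta> (shell_ext n Fp Fm) y)
     \<le> ext_const n \<alpha> \<beta> * (\<Sum>i\<in>ext_indices n \<alpha> \<beta>. tnorm n i Fp + tnorm n i Fm)"
    (is "_ \<le> _ * ?N")
proof -
  note valid = ext_indices_valid[OF b]
  have N0: "?N \<ge> 0"
    using tnorm_nonneg_on[OF Fp valid(2)] tnorm_nonneg_on[OF Fm valid(2)] by (intro sum_nonneg) auto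
  show ?thesis
    using y
  proof (cases rule: shell_ext_locally[of y n Fp Fm])
    case (zero e)
    have "pds \<beta> (shell_ext n Fp Fm) y = pds \<beta> (\<lambda>_. 0) y"
      by (rule pds_local[OF _ b near_self[OF y zero(1)]]) (simp add: zero(2))
    then show ?thesis using N0 ext_const_nonneg by (simp add: pds_zero)
  next
    case (shell e m \<sigma> F)
    have sF: "\<sigma> = 1 \<and> F = Fp \<or> \<sigma> = -1 \<and> F = Fm" using shell(2) by simp
    then have F: "ts_space n F" and \<sigma>: "\<bar>\<sigma>\<bar> = 1" using Fp Fm by auto
    let ?L = "iter_diff_terms \<sigma> \<beta> base_terms"
    have L: "valid_terms n ?L" by (rule valid_iter_diff_terms[OF valid_base_terms b])
    have sub: "terms_indices n \<alpha> ?L \<subseteq> ext_indices n \<alpha> \<beta>"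
      using sF by (auto simp: ext_indices_def)
    have "(\<Sum>i\<in>terms_indices n \<alpha> ?L. tnorm n i F) \<le> (\<Sum>i\<in>ext_indices n \<alpha> \<beta>. tnorm n i F)"
      using tnorm_nonneg_on[OF F valid(2)] by (intro sum_mono2[OF valid(1) sub]) auto
    also have "\<dots> \<le> ?N"
      using sF tnorm_nonneg_on[OF Fp valid(2)] tnorm_nonneg_on[OF Fm valid(2)] by (intro sum_mono) auto
    finally have sumN: "(\<Sum>i\<in>terms_indices n \<alpha> ?L. tnorm n i F) \<le> ?N" .
    have r: "\<delta>/2 > 0" using delta_pos by simp
    have C: "0 \<le> terms_const n (\<delta>/2) A \<alpha> (iter_diff_terms s \<beta> base_terms)" for s
      by (rule terms_const_nonneg[OF r A_nonneg])
    then have CL: "terms_const n (\<delta>/2) A \<alpha> ?L \<le> ext_const n \<alpha> \<beta>"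
      using sF C[of 1] C[of "-1"] unfolding ext_const_def by auto
    have G: "schwartz n (F m)" using F by (simp add: ts_space_def)
    have "pds \<beta> (shell_ext n Fp Fm) y = pds \<beta> (eval_terms n (\<delta>/2) (a m) \<sigma> (F m) base_terms) y"
      by (rule pds_local[OF _ b near_self[OF y shell(1)]]) (simp add: shell(3))
    also have "\<dots> = eval_terms n (\<delta>/2) (a m) \<sigma> (F m) ?L y"
      by (rule fun_cong[OF pds_eval_terms[OF G b valid_base_terms]])
    finally have "norm (complex_of_real (mon (Suc n) \<alpha> y) * pds \<beta> (shell_ext n Fp Fm) y)
        \<le> terms_const n (\<delta>/2) A \<alpha> ?L * (\<Sum>i\<in>terms_indices n \<alpha> ?L. tnorm n i F)"
      using eval_terms_bound[OF r A_nonneg L \<sigma> F y shell_le] by simp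
    also have "\<dots> \<le> ext_const n \<alpha> \<beta> * ?N"
      using CL C sumN tnorm_nonneg_on[OF F terms_indices_valid[OF L]]
      by (intro mult_mono' sum_nonneg) auto
    finally show ?thesis .
  qed
qed

lemma shell_ext_schwartz:
  assumes Fp: "ts_space n Fp" and Fm: "ts_space n Fm"
  shows "schwartz (Suc n) (shell_ext n Fp Fm)"
  unfolding schwartz_def
proof (intro conjI allI impI ballI)
  show "shell_ext n Fp Fm x = 0" if "x \<notin> Eucl (Suc n)" for x
    using that by (simp add: shell_ext_def)
  show "(\<lambda>t. pds \<beta> (shell_ext n Fp Fm) (x(i := t))) differentiable at (x i)"
    if "set \<beta> \<subseteq> {..<Suc n}" "x \<in> Eucl (Suc n)" "i < Suc n" for \<beta> x i
    by (rule shell_ext_pds_differentiable[OF Fp Fm that])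
  show "bounded ((\<lambda>x. complex_of_real (mon (Suc n) \<alpha> x) * pds \<beta> (shell_ext n Fp Fm) x) ` Eucl (Suc n))"
    if "set \<beta> \<subseteq> {..<Suc n}" for \<beta> \<alpha>
    unfolding bounded_iff using shell_ext_bound[OF Fp Fm that] by auto
qed

lemma shell_ext_snorm_le:
  assumes "ts_space n Fp" "ts_space n Fm" "set \<beta> \<subseteq> {..<Suc n}"
  shows "snorm (Suc n) \<alpha> \<beta> (shell_ext n Fp Fm)
           \<le> ext_const n \<alpha> \<beta> * (\<Sum>i\<in>ext_indices n \<alpha> \<beta>. tnorm n i Fp + tnorm n i Fm)"
  unfolding snorm_def using shell_ext_bound[OF assms] zero_in_Eucl[of "Suc n"]
  by (intro cSUP_least) auto

end

lemma qseq_shells: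
  assumes S: "S > 0" and c: "c > 0" and \<mu>: "\<mu> > 0"
  shows "separated_shells (\<lambda>m. (qseq S c m)\<^sup>2 + \<mu>\<^sup>2) (min ((qseq_gap S c)\<^sup>2 / 2) (\<mu>\<^sup>2)) ((pi/S)\<^sup>2 + \<mu>\<^sup>2)"
proof
  show "0 < min ((qseq_gap S c)\<^sup>2 / 2) (\<mu>\<^sup>2)" using qseq_gap_pos[OF S c] \<mu> by simp
  show "min ((qseq_gap S c)\<^sup>2 / 2) (\<mu>\<^sup>2) \<le> (qseq S c m)\<^sup>2 + \<mu>\<^sup>2" for m
    using min.cobounded2[of "(qseq_gap S c)\<^sup>2 / 2" "\<mu>\<^sup>2"] zero_le_power2[of "qseq S c m"] by linarith
  show "2 * min ((qseq_gap S c)\<^sup>2 / 2) (\<mu>\<^sup>2) \<le> \<bar>(qseq S c m)\<^sup>2 + \<mu>\<^sup>2 - ((qseq S c m')\<^sup>2 + \<mu>\<^sup>2)\<bar>"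
    if "m \<noteq> m'" for m m'
    using qseq_sq_separated[OF S c that] by simp
  show "\<bar>(qseq S c m)\<^sup>2 + \<mu>\<^sup>2\<bar> \<le> ((pi/S)\<^sup>2 + \<mu>\<^sup>2) * (real m + 1)\<^sup>2" for m
  proof -
    have "qseq S c m \<le> (real m + 1) * pi / S" by (rule qseq_le_linear[OF S c])
    then have "(qseq S c m)\<^sup>2 \<le> ((real m + 1) * pi / S)\<^sup>2"
      using qseq_nonneg[OF S c] by (intro power_mono) auto
    also have "\<dots> = (pi/S)\<^sup>2 * (real m + 1)\<^sup>2" by (simp add: power_mult_distrib power_divide)
    finally have "(qseq S c m)\<^sup>2 \<le> (pi/S)\<^sup>2 * (real m + 1)\<^sup>2" .
    moreover have "\<mu>\<^sup>2 * 1 \<le> \<mu>\<^sup>2 * (real m + 1)\<^sup>2" by (intro mult_left_mono) auto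
    ultimately show ?thesis by (simp add: algebra_simps)
  qed
qed

theorem lemma1:
  fixes d :: nat and S c \<mu> :: real
  assumes "d \<ge> 1" and "S > 0" and "c > 0" and "\<mu> > 0"
  shows "\<exists>T :: (nat \<Rightarrow> (nat \<Rightarrow> real) \<Rightarrow> complex) \<times> (nat \<Rightarrow> (nat \<Rightarrow> real) \<Rightarrow> complex)
                 \<Rightarrow> ((nat \<Rightarrow> real) \<Rightarrow> complex).
    (\<forall>Fp Fm. ts_space (d - 1) Fp \<and> ts_space (d - 1) Fm \<longrightarrow> schwartz d (T (Fp, Fm))) \<and>
    (\<forall>Fp Fm Gp Gm a b. ts_space (d - 1) Fp \<and> ts_space (d - 1) Fm \<and>
        ts_space (d - 1) Gp \<and> ts_space (d - 1) Gm \<longrightarrow>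
        T (\<lambda>m k. a * Fp m k + b * Gp m k, \<lambda>m k. a * Fm m k + b * Gm m k)
          = (\<lambda>x. a * T (Fp, Fm) x + b * T (Gp, Gm) x)) \<and>
    (\<forall>\<alpha> \<beta>. set \<beta> \<subseteq> {..<d} \<longrightarrow>
        (\<exists>C \<ge> 0. \<exists>I. finite I \<and> (\<forall>(c', \<alpha>', \<beta>') \<in> I. set \<beta>' \<subseteq> {..<d - 1}) \<and>
           (\<forall>Fp Fm. ts_space (d - 1) Fp \<and> ts_space (d - 1) Fm \<longrightarrow>
              snorm d \<alpha> \<beta> (T (Fp, Fm)) \<le> C * (\<Sum>i\<in>I. tnorm (d - 1) i Fp + tnorm (d - 1) i Fm)))) \<and>
    (\<forall>Fp Fm. ts_space (d - 1) Fp \<and> ts_space (d - 1) Fm \<longrightarrow>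
        (\<forall>k \<in> Eucl (d - 1). \<forall>m.
           Fp m k = T (Fp, Fm) (pt (omega S c \<mu> (d - 1) k m) k) \<and>
           Fm m k = T (Fp, Fm) (pt (- omega S c \<mu> (d - 1) k m) (\<lambda>i. - k i))))"
proof -
  define n where "n = d - 1"
  have d: "d = Suc n" using assms(1) by (simp add: n_def)
  define a where "a m = (qseq S c m)\<^sup>2 + \<mu>\<^sup>2" for m
  interpret separated_shells a "min ((qseq_gap S c)\<^sup>2 / 2) (\<mu>\<^sup>2)" "(pi/S)\<^sup>2 + \<mu>\<^sup>2"
    unfolding a_def using qseq_shells assms(2-4) .
  have omega: "omega S c \<mu> n k m = sqrt (sqnorm n k + a m)" for k m
    by (simp add: omega_def a_def add.assoc)
  define T where "T = (\<lambda>(Fp, Fm). shell_ext n Fp Fm)"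
  have T: "T (Fp, Fm) = shell_ext n Fp Fm" for Fp Fm by (simp add: T_def)
  have seminorm_bound: "\<exists>C \<ge> 0. \<exists>I. finite I \<and> (\<forall>(c', \<alpha>', \<beta>') \<in> I. set \<beta>' \<subseteq> {..<n}) \<and>
           (\<forall>Fp Fm. ts_space n Fp \<and> ts_space n Fm \<longrightarrow>
              snorm (Suc n) \<alpha> \<beta> (T (Fp, Fm)) \<le> C * (\<Sum>i\<in>I. tnorm n i Fp + tnorm n i Fm))"
    if "set \<beta> \<subseteq> {..<Suc n}" for \<alpha> \<beta>
  proof (intro exI[of _ "ext_const n \<alpha> \<beta>"] conjI[OF ext_const_nonneg] exI[of _ "ext_indices n \<alpha> \<beta>"] conjI)
    show "finite (ext_indices n \<alpha> \<beta>)" "\<forall>(c', \<alpha>', \<beta>') \<in> ext_indices n \<alpha> \<beta>. set \<beta>' \<subseteq> {..<n}"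
      by (rule ext_indices_valid[OF that])+
  qed (simp add: T shell_ext_snorm_le[OF _ _ that])
  show ?thesis unfolding n_def[symmetric] unfolding d
    by (intro exI[of _ T] conjI allI impI ballI seminorm_bound)
       (simp_all add: T shell_ext_schwartz shell_ext_linear omega shell_ext_on_shell)
qed

end
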